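(* Let $\Omega \subset \mathbb{R}^n$ be a bounded domain, $V$ a suitable function space (a subspace of $H^1(\Omega)$), $D \subseteq \mathbb{R}^d$ a parameter set with a probability distribution $\mathcal{P}$ on $D$. For each $\mathbf{p} \in D$ let $E = E_{\mathbf{p}}: V \to \mathbb{R}$ be an energy of the form $E(v) = \frac{1}{2}(A\nabla v, \nabla v) - (f, v)$, where either (i) $A = A(\mathbf{p}, x)$ does not depend on $v$, $A \geq \alpha > 0$, and $f \in L^2(\Omega)$; or (ii) $f = 0$ and $A = A(v)$ depends (differentiably, pointwise) on $v$ with $A(v) \geq \alpha > 0$ for all $v$ and $A'(u_h)u_h \geq 0$, where $u_h$ is the discrete minimizer below. Let $\mathcal{A}: D \to V$ be the solution operator $\mathcal{A}(\mathbf{p}) = u = \operatorname{argmin}_{v \in V} E(v)$. Let $V_h \subseteq V$ be a Lagrangian finite element space of polynomial degree $p$ on a mesh of $\Omega$ with maximal element diameter $h$, and let $\mathcal{A}_h: D \to V_h$, $\mathcal{A}_h(\mathbf{p}) = u_h = \operatorname{argmin}_{v \in V_h} E(v)$, be the discrete solution operator; assume the standard finite element a priori estimate $\|\nabla u - \nabla u_h\|^2 \lesssim h^{2p}\|D^{p+1}u\|^2$ holds. Let $\mathcal{A}_{h,\theta}: D \to V_h$ be any map (a neural network approximation of $\mathcal{A}_h$) satisfying the well-trainedness assumption $$\mathbb{E}_{\mathbf{p} \sim \mathcal{P}}\big[E(\mathcal{A}_{h,\theta}(\mathbf{p})) - E(\mathcal{A}_h(\mathbf{p}))\big] \leq \epsilon$$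 for some $\epsilon > 0$. Then there exists a positive constant $C$, independent of $h$ and $\epsilon$, such that $$\mathbb{E}_{\mathbf{p} \sim \mathcal{P}}\Big[\|\nabla \mathcal{A}(\mathbf{p}) - \nabla \mathcal{A}_{h,\theta}(\mathbf{p})\|_{L^2(\Omega)}^2\Big] \leq C\Big( h^{2p}\, \mathbb{E}_{\mathbf{p} \sim \mathcal{P}}\Big[\|D^{p+1}\mathcal{A}(\mathbf{p})\|_{L^2(\Omega)}^2\Big] + \epsilon\Big).$$
   Context: $(\cdot,\cdot)$ and $\|\cdot\|$ denote the $L^2(\Omega)$ inner product and norm; $D^{p+1}$ denotes the tensor of all partial derivatives of order $p+1$. The energy $E$ depends on the parameter $\mathbf{p}$ (through coefficients, right-hand side or boundary data). A neural network $\mathcal{A}_{h,\theta}$ is a parametrized map (here an MLP with weights $\theta$) from $D$ to the nodal values of functions in $V_h$; only the fact that it maps into $V_h$ is used. The symbol $\lesssim$ means $\leq$ up to a positive constant independent of $h$. *)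

theory Defs
  imports "HOL-Probability.Probability"
begin

definition partial :: "'n::finite \<Rightarrow> (real^'n \<Rightarrow> real) \<Rightarrow> real^'n \<Rightarrow> real" where
  "partial i \<phi> x = frechet_derivative \<phi> (at x) (axis i 1)"

fun partial_list :: "'n::finite list \<Rightarrow> (real^'n \<Rightarrow> real) \<Rightarrow> real^'n \<Rightarrow> real" where
  "partial_list [] \<phi> = \<phi>"
| "partial_list (i # is) \<phi> = partial i (partial_list is \<phi>)"

definition test_fun :: "(real^'n::finite) set \<Rightarrow> (real^'n \<Rightarrow> real) \<Rightarrow> bool" where
  "test_fun \<Omega> \<phi> \<longleftrightarrow>
     (\<forall>is x. partial_list is \<phi> differentiable (at x)) \<and>
     compact (closure {x. \<phi> x \<noteq> 0}) \<and> closure {x. \<phi> x \<noteq> 0} \<subseteq> \<Omega>"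

definition weak_deriv :: "(real^'n::finite) set \<Rightarrow> 'n list \<Rightarrow> (real^'n \<Rightarrow> real) \<Rightarrow> (real^'n \<Rightarrow> real) \<Rightarrow> bool" where
  "weak_deriv \<Omega> is u g \<longleftrightarrow>
     u \<in> borel_measurable (lebesgue_on \<Omega>) \<and> g \<in> borel_measurable (lebesgue_on \<Omega>) \<and>
     (\<forall>\<phi>. test_fun \<Omega> \<phi> \<longrightarrow>
        integrable (lebesgue_on \<Omega>) (\<lambda>x. u x * partial_list is \<phi> x) \<and>
        integrable (lebesgue_on \<Omega>) (\<lambda>x. g x * \<phi> x) \<and>
        (\<integral>x. u x * partial_list is \<phi> x \<partial>lebesgue_on \<Omega>)
          = (-1) ^ length is * (\<integral>x. g x * \<phi> x \<partial>lebesgue_on \<Omega>))"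

definition L2 :: "(real^'n::finite) set \<Rightarrow> (real^'n \<Rightarrow> real) \<Rightarrow> bool" where
  "L2 \<Omega> u \<longleftrightarrow> u \<in> borel_measurable (lebesgue_on \<Omega>) \<and>
     set_nn_integral lebesgue \<Omega> (\<lambda>x. ennreal ((u x)\<^sup>2)) < \<infinity>"

definition H1 :: "(real^'n::finite) set \<Rightarrow> (real^'n \<Rightarrow> real) set" where
  "H1 \<Omega> = {u. L2 \<Omega> u \<and> (\<forall>i. \<exists>g. weak_deriv \<Omega> [i] u g \<and> L2 \<Omega> g)}"

text \<open>Weak gradient (a representative; unique a.e. for H^1 functions).\<close>
definition weak_grad :: "(real^'n::finite) set \<Rightarrow> (real^'n \<Rightarrow> real) \<Rightarrow> real^'n \<Rightarrow> real^'n" where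
  "weak_grad \<Omega> u x = (\<chi> i. (SOME g. weak_deriv \<Omega> [i] u g) x)"

definition grad_dist2 :: "(real^'n::finite) set \<Rightarrow> (real^'n \<Rightarrow> real) \<Rightarrow> (real^'n \<Rightarrow> real) \<Rightarrow> ennreal" where
  "grad_dist2 \<Omega> u w =
     set_nn_integral lebesgue \<Omega> (\<lambda>x. ennreal ((norm (weak_grad \<Omega> u x - weak_grad \<Omega> w x))\<^sup>2))"

text \<open>|| D^m u ||_{L^2(\<Omega>)}^2 : sum over all entries of the tensor of partial derivatives of
  order m (indexed by lists of coordinates of length m); infinite if some weak derivative of
  order m does not exist in L^2.\<close>
definition Dnorm2 :: "(real^'n::finite) set \<Rightarrow> nat \<Rightarrow> (real^'n \<Rightarrow> real) \<Rightarrow> ennreal" where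
  "Dnorm2 \<Omega> m u =
     (\<Sum>is\<in>{is :: 'n list. length is = m}.
        if \<exists>g. weak_deriv \<Omega> is u g \<and> L2 \<Omega> g
        then set_nn_integral lebesgue \<Omega>
               (\<lambda>x. ennreal (((SOME g. weak_deriv \<Omega> is u g \<and> L2 \<Omega> g) x)\<^sup>2))
        else \<infinity>)"

definition lin_subspace :: "(real^'n::finite \<Rightarrow> real) set \<Rightarrow> bool" where
  "lin_subspace V \<longleftrightarrow> (\<lambda>x. 0) \<in> V \<and> (\<forall>v\<in>V. \<forall>w\<in>V. (\<lambda>x. v x + w x) \<in> V) \<and>
     (\<forall>c. \<forall>v\<in>V. (\<lambda>x. c * v x) \<in> V)"

definition bounded_domain :: "(real^'n::finite) set \<Rightarrow> bool" where
  "bounded_domain \<Omega> \<longleftrightarrow> open \<Omega> \<and> connected \<Omega> \<and> bounded \<Omega> \<and> \<Omega> \<noteq> {}"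

definition vertices :: "(real^'n::finite) set \<Rightarrow> (real^'n) set" where
  "vertices K = {x. x extreme_point_of K}"

definition is_simplex :: "(real^'n::finite) set \<Rightarrow> bool" where
  "is_simplex K \<longleftrightarrow> (\<exists>S. finite S \<and> card S = CARD('n) + 1 \<and> \<not> affine_dependent S \<and> K = convex hull S)"

definition is_mesh :: "(real^'n::finite) set \<Rightarrow> (real^'n) set set \<Rightarrow> bool" where
  "is_mesh \<Omega> T \<longleftrightarrow> finite T \<and> T \<noteq> {} \<and> (\<forall>K\<in>T. is_simplex K) \<and> \<Union>T = closure \<Omega> \<and>
     (\<forall>K\<in>T. \<forall>K'\<in>T. K \<noteq> K' \<longrightarrow>
        interior K \<inter> interior K' = {} \<and> K \<inter> K' = convex hull (vertices K \<inter> vertices K'))"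

definition mesh_size :: "(real^'n::finite) set set \<Rightarrow> real" where
  "mesh_size T = Max (diameter ` T)"

definition poly_deg :: "nat \<Rightarrow> (real^'n::finite \<Rightarrow> real) \<Rightarrow> bool" where
  "poly_deg p q \<longleftrightarrow> (\<exists>c :: ('n \<Rightarrow> nat) \<Rightarrow> real.
     q = (\<lambda>x. \<Sum>\<alpha>\<in>{\<alpha>. sum \<alpha> UNIV \<le> p}. c \<alpha> * (\<Prod>i\<in>UNIV. (x $ i) ^ \<alpha> i)))"

definition lagrange_fe :: "(real^'n::finite) set \<Rightarrow> (real^'n) set set \<Rightarrow> nat \<Rightarrow>
    (real^'n \<Rightarrow> real) set \<Rightarrow> (real^'n \<Rightarrow> real) set" where
  "lagrange_fe \<Omega> T p V = {v\<in>V. continuous_on (closure \<Omega>) v \<and>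
     (\<forall>K\<in>T. \<exists>q. poly_deg p q \<and> (\<forall>x\<in>K. v x = q x))}"

end

theory Submission
  imports Defs "HOL-Computational_Algebra.Polynomial"
begin

(* By the triangle inequality,
     |grad (u - u_theta)|^2 <= 2 |grad (u - u_h)|^2 + 2 |grad (u_h - u_theta)|^2.
   The first term is controlled by the a priori estimate.  For the second, the discrete minimiser
   u_h of E on the linear space V_h satisfies E v - E u_h >= alpha/2 |grad (v - u_h)|^2 for all
   v in V_h: for a quadratic energy because t |-> E (u_h + t (v - u_h)) is a quadratic polynomial
   minimal at t = 0 whose leading coefficient is coercive; for the coefficient-dependent energy
   without load because E >= 0 = E 0, so u_h has zero energy and zero gradient.  Taking
   expectations gives the bound with C = 2 max Ca 0 + 4 / alpha.

   The energy only sees the weak gradient chosen by Hilbert's choice operator, so the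
   quadratic expansion needs uniqueness of weak derivatives almost everywhere.  This is the
   fundamental lemma of the calculus of variations, proved with smooth bump functions
   approximating indicators of boxes. *)

section \<open>Smooth bump functions\<close>

fun smooth_upto :: "nat \<Rightarrow> (real \<Rightarrow> real) \<Rightarrow> bool" where
  "smooth_upto 0 f = True"
| "smooth_upto (Suc k) f \<longleftrightarrow> (\<forall>x. f differentiable (at x)) \<and> smooth_upto k (deriv f)"

definition smooth :: "(real \<Rightarrow> real) \<Rightarrow> bool" where
  "smooth f \<longleftrightarrow> (\<forall>k. smooth_upto k f)"

lemma smooth_upto_SucD: "smooth_upto (Suc k) f \<Longrightarrow> smooth_upto k f"
  by (induction k arbitrary: f) auto

lemma smooth_deriv: "smooth f \<Longrightarrow> smooth (deriv f)"
  unfolding smooth_def by (metis smooth_upto.simps(2))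

lemma smooth_differentiable: "smooth f \<Longrightarrow> f differentiable (at x)"
  unfolding smooth_def by (metis smooth_upto.simps(2))

lemma smooth_funpow_deriv: "smooth f \<Longrightarrow> smooth ((deriv ^^ k) f)"
  by (induction k) (auto intro: smooth_deriv)

lemma smooth_upto_add: "smooth_upto k f \<Longrightarrow> smooth_upto k g \<Longrightarrow> smooth_upto k (\<lambda>t. f t + g t)"
proof (induction k arbitrary: f g)
  case (Suc k)
  have "deriv (\<lambda>t. f t + g t) = (\<lambda>t. deriv f t + deriv g t)"
    using Suc.prems
    by (intro ext DERIV_imp_deriv)
       (auto intro!: derivative_intros DERIV_deriv_iff_real_differentiable[THEN iffD2])
  then show ?case using Suc by auto
qed simp

lemma smooth_upto_cmult: "smooth_upto k f \<Longrightarrow> smooth_upto k (\<lambda>t. c * f t)"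
proof (induction k arbitrary: f)
  case (Suc k)
  have "deriv (\<lambda>t. c * f t) = (\<lambda>t. c * deriv f t)"
    using Suc.prems
    by (intro ext DERIV_imp_deriv DERIV_cmult DERIV_deriv_iff_real_differentiable[THEN iffD2]) auto
  then show ?case using Suc by auto
qed simp

lemma smooth_upto_mult: "smooth_upto k f \<Longrightarrow> smooth_upto k g \<Longrightarrow> smooth_upto k (\<lambda>t. f t * g t)"
proof (induction k arbitrary: f g)
  case (Suc k)
  have "deriv (\<lambda>t. f t * g t) = (\<lambda>t. deriv f t * g t + f t * deriv g t)"
    using Suc.prems
    by (intro ext DERIV_imp_deriv)
       (auto intro!: derivative_eq_intros DERIV_deriv_iff_real_differentiable[THEN iffD2])
  moreover have "smooth_upto k f" "smooth_upto k g"
    using Suc.prems smooth_upto_SucD by blast+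
  ultimately show ?case using Suc by (auto intro!: smooth_upto_add)
qed simp

lemma smooth_upto_affine: "smooth_upto k f \<Longrightarrow> smooth_upto k (\<lambda>t. f (c * t + d))"
proof (induction k arbitrary: f)
  case (Suc k)
  have chain: "((\<lambda>t. f (c * t + d)) has_real_derivative c * deriv f (c * x + d)) (at x)" for x
  proof -
    have "(f has_real_derivative deriv f (c * x + d)) (at (c * x + d))"
      using Suc.prems by (auto intro: DERIV_deriv_iff_real_differentiable[THEN iffD2])
    moreover have "((\<lambda>t. c * t + d) has_real_derivative c) (at x)"
      by (auto intro!: derivative_eq_intros)
    ultimately show ?thesis
      by (subst mult.commute) (rule DERIV_chain2)
  qed
  then have "deriv (\<lambda>t. f (c * t + d)) = (\<lambda>t. (\<lambda>s. c * deriv f s) (c * t + d))"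
    by (intro ext DERIV_imp_deriv) simp
  moreover have "smooth_upto k (\<lambda>s. c * deriv f s)"
    using Suc.prems by (auto intro: smooth_upto_cmult)
  ultimately show ?case
    using Suc.IH chain real_differentiable_def by auto
qed simp

lemma smooth_mult: "smooth f \<Longrightarrow> smooth g \<Longrightarrow> smooth (\<lambda>t. f t * g t)"
  unfolding smooth_def by (auto intro: smooth_upto_mult)

lemma smooth_affine: "smooth f \<Longrightarrow> smooth (\<lambda>t. f (c * t + d))"
  unfolding smooth_def by (auto intro: smooth_upto_affine)

lemma poly_times_exp_neg_tendsto_0: "((\<lambda>s. poly P s * exp (- s)) \<longlongrightarrow> (0::real)) at_top"
proof -
  have "((\<lambda>s. \<Sum>i\<le>degree P. coeff P i * (s ^ i / exp s)) \<longlongrightarrow> (\<Sum>i\<le>degree P. coeff P i * 0)) at_top"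
    by (intro tendsto_sum tendsto_mult tendsto_const tendsto_power_div_exp_0)
  moreover have "(\<Sum>i\<le>degree P. coeff P i * (s ^ i / exp s)) = poly P s * exp (- s)" for s
    by (simp add: poly_altdef sum_distrib_right exp_minus divide_inverse mult.assoc)
  ultimately show ?thesis by simp
qed

text \<open>Differentiating \<open>P(1/t) e\<^sup>-\<^sup>1\<^sup>/\<^sup>t\<close> gives \<open>Q(1/t) e\<^sup>-\<^sup>1\<^sup>/\<^sup>t\<close> with \<open>Q(s) = s\<^sup>2 (P(s) - P'(s))\<close>,
  so all derivatives have this shape and, by \<open>poly_times_exp_neg_tendsto_0\<close>, vanish at \<open>0\<close>.\<close>

definition flat_poly_exp :: "real poly \<Rightarrow> real \<Rightarrow> real" where
  "flat_poly_exp P t = (if 0 < t then poly P (inverse t) * exp (- inverse t) else 0)"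

definition flat_deriv_poly :: "real poly \<Rightarrow> real poly" where
  "flat_deriv_poly P = [:0, 0, 1:] * (P - pderiv P)"

lemma flat_poly_exp_deriv_pos:
  assumes "0 < t"
  shows "(flat_poly_exp P has_real_derivative flat_poly_exp (flat_deriv_poly P) t) (at t)"
proof -
  have inv: "(inverse has_real_derivative - (inverse t * inverse t)) (at t)"
    using assms by (auto intro!: derivative_eq_intros)
  have "((\<lambda>t. poly P (inverse t)) has_real_derivative
          poly (pderiv P) (inverse t) * (- (inverse t * inverse t))) (at t)"
    by (rule DERIV_chain2[OF poly_DERIV inv])
  moreover have "((\<lambda>t. exp (- inverse t)) has_real_derivative
                   exp (- inverse t) * (inverse t * inverse t)) (at t)"
    using DERIV_chain2[OF DERIV_exp DERIV_minus[OF inv]] by simp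
  ultimately have "((\<lambda>t. poly P (inverse t) * exp (- inverse t)) has_real_derivative
                     flat_poly_exp (flat_deriv_poly P) t) (at t)"
    using assms by (auto dest: DERIV_mult simp: flat_poly_exp_def flat_deriv_poly_def algebra_simps)
  then show ?thesis
    by (rule has_field_derivative_transform_within_open[where S="{0<..}"])
       (use assms in \<open>auto simp: flat_poly_exp_def\<close>)
qed

lemma flat_poly_exp_deriv_neg:
  assumes "t < 0"
  shows "(flat_poly_exp P has_real_derivative flat_poly_exp (flat_deriv_poly P) t) (at t)"
proof -
  have "((\<lambda>t. 0) has_real_derivative 0) (at t)" by simp
  then have "(flat_poly_exp P has_real_derivative 0) (at t)"
    by (rule has_field_derivative_transform_within_open[where S="{..<0}"])
       (use assms in \<open>auto simp: flat_poly_exp_def\<close>)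
  then show ?thesis using assms by (simp add: flat_poly_exp_def)
qed

lemma flat_poly_exp_deriv_0:
  "(flat_poly_exp P has_real_derivative flat_poly_exp (flat_deriv_poly P) 0) (at 0)"
proof -
  let ?q = "\<lambda>y. (flat_poly_exp P y - flat_poly_exp P 0) / (y - 0)"
  have "(?q \<longlongrightarrow> 0) (at_left 0)"
    by (rule Lim_transform_eventually[OF tendsto_const])
       (auto simp: flat_poly_exp_def intro!: eventually_mono[OF eventually_at_left_real[of "-1" 0]])
  moreover have "((\<lambda>y. poly (pCons 0 P) (inverse y) * exp (- inverse y)) \<longlongrightarrow> 0) (at_right 0)"
    by (rule filterlim_compose[OF poly_times_exp_neg_tendsto_0 filterlim_inverse_at_top_right])
  then have "(?q \<longlongrightarrow> 0) (at_right 0)"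
    by (rule Lim_transform_eventually)
       (auto simp: flat_poly_exp_def field_simps intro!: eventually_mono[OF eventually_at_right_real[of 0 1]])
  ultimately have "(?q \<longlongrightarrow> 0) (at 0)"
    by (rule filterlim_split_at)
  then show ?thesis
    by (simp add: has_field_derivative_iff flat_poly_exp_def)
qed

lemma flat_poly_exp_has_real_derivative:
  "(flat_poly_exp P has_real_derivative flat_poly_exp (flat_deriv_poly P) t) (at t)"
  using flat_poly_exp_deriv_pos flat_poly_exp_deriv_neg flat_poly_exp_deriv_0
  by (metis linorder_neqE_linordered_idom)

lemma smooth_flat_poly_exp: "smooth (flat_poly_exp P)"
  unfolding smooth_def
proof
  fix k show "smooth_upto k (flat_poly_exp P)"
  proof (induction k arbitrary: P)
    case (Suc k)
    have "deriv (flat_poly_exp P) = flat_poly_exp (flat_deriv_poly P)"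
      by (intro ext DERIV_imp_deriv flat_poly_exp_has_real_derivative)
    then show ?case
      using Suc flat_poly_exp_has_real_derivative real_differentiable_def by auto
  qed simp
qed

definition flat_exp :: "real \<Rightarrow> real" where
  "flat_exp t = (if 0 < t then exp (- inverse t) else 0)"

lemma smooth_flat_exp: "smooth flat_exp"
proof -
  have "flat_exp = flat_poly_exp 1"
    by (auto simp: flat_exp_def flat_poly_exp_def)
  then show ?thesis by (metis smooth_flat_poly_exp)
qed

lemma flat_exp_nonneg: "0 \<le> flat_exp t"
  and flat_exp_le_1: "flat_exp t \<le> 1"
  and flat_exp_pos: "0 < t \<Longrightarrow> 0 < flat_exp t"
  and flat_exp_eq_0: "t \<le> 0 \<Longrightarrow> flat_exp t = 0"
  by (auto simp: flat_exp_def)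

lemma flat_exp_tendsto_1:
  assumes "0 < u"
  shows "(\<lambda>k. flat_exp (real (Suc k) * u)) \<longlonglongrightarrow> 1"
proof -
  have "filterlim (\<lambda>k. real (Suc k) * u) at_top sequentially"
    using assms filterlim_compose[OF filterlim_real_sequentially filterlim_Suc]
    by (intro filterlim_at_top_mult_tendsto_pos[OF tendsto_const]) (auto simp: o_def)
  then have "(\<lambda>k. exp (- inverse (real (Suc k) * u))) \<longlonglongrightarrow> exp (- 0)"
    by (intro tendsto_intros tendsto_inverse_0_at_top)
  moreover have "flat_exp (real (Suc k) * u) = exp (- inverse (real (Suc k) * u))" for k
    using assms by (simp add: flat_exp_def)
  ultimately show ?thesis by simp
qed

definition bump :: "real \<Rightarrow> real \<Rightarrow> real \<Rightarrow> real \<Rightarrow> real" where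
  "bump s a b t = flat_exp (s * (t - a)) * flat_exp (s * (b - t))"

lemma smooth_bump: "smooth (bump s a b)"
proof -
  have "smooth (\<lambda>t. flat_exp (s * t + - s * a) * flat_exp (- s * t + s * b))"
    by (intro smooth_mult smooth_affine[OF smooth_flat_exp])
  moreover have "bump s a b = (\<lambda>t. flat_exp (s * t + - s * a) * flat_exp (- s * t + s * b))"
    by (auto simp: bump_def algebra_simps)
  ultimately show ?thesis by simp
qed

lemma bump_nonneg: "0 \<le> bump s a b t"
  and bump_le_1: "bump s a b t \<le> 1"
  unfolding bump_def by (auto intro!: mult_le_one mult_nonneg_nonneg flat_exp_nonneg flat_exp_le_1)

lemma bump_pos: "0 < s \<Longrightarrow> a < t \<Longrightarrow> t < b \<Longrightarrow> 0 < bump s a b t"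
  unfolding bump_def by (auto intro!: mult_pos_pos flat_exp_pos)

lemma bump_eq_0: "0 < s \<Longrightarrow> t \<le> a \<or> b \<le> t \<Longrightarrow> bump s a b t = 0"
  unfolding bump_def by (auto simp: flat_exp_eq_0 mult_nonneg_nonpos)

lemma bump_tendsto_1: "a < t \<Longrightarrow> t < b \<Longrightarrow> (\<lambda>k. bump (real (Suc k)) a b t) \<longlonglongrightarrow> 1"
  unfolding bump_def using tendsto_mult[OF flat_exp_tendsto_1 flat_exp_tendsto_1] by simp

definition coord_prod :: "('n::finite \<Rightarrow> real \<Rightarrow> real) \<Rightarrow> real^'n \<Rightarrow> real" where
  "coord_prod F x = (\<Prod>i\<in>UNIV. F i (x$i))"

lemma coord_prod_has_derivative:
  assumes "\<And>i t. F i differentiable (at t)"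
  shows "(coord_prod F has_derivative
           (\<lambda>y. \<Sum>i\<in>UNIV. deriv (F i) (x$i) * y$i * (\<Prod>j\<in>UNIV-{i}. F j (x$j)))) (at x)"
  unfolding coord_prod_def
proof (rule has_derivative_prod)
  fix i
  have "(F i has_derivative (\<lambda>h. h * deriv (F i) (x$i))) (at (x$i))"
    using assms DERIV_deriv_iff_real_differentiable has_field_derivative_def
    by (metis mult_commute_abs)
  from has_derivative_compose[OF bounded_linear_imp_has_derivative[OF bounded_linear_vec_nth] this]
  show "((\<lambda>x. F i (x$i)) has_derivative (\<lambda>y. deriv (F i) (x$i) * y$i)) (at x)"
    by (simp add: o_def mult.commute)
qed

lemma partial_coord_prod:
  assumes "\<And>i t. F i differentiable (at t)"
  shows "partial j (coord_prod F) = coord_prod (\<lambda>i. if i = j then deriv (F i) else F i)"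
proof
  fix x
  have "partial j (coord_prod F) x
      = (\<Sum>i\<in>UNIV. deriv (F i) (x$i) * (axis j 1 :: real^_)$i * (\<Prod>k\<in>UNIV-{i}. F k (x$k)))"
    unfolding partial_def frechet_derivative_at[OF coord_prod_has_derivative[OF assms], symmetric] ..
  also have "\<dots> = deriv (F j) (x$j) * (\<Prod>k\<in>UNIV-{j}. F k (x$k))"
    by (subst sum.remove[of UNIV j]) (auto simp: axis_def)
  also have "\<dots> = coord_prod (\<lambda>i. if i = j then deriv (F i) else F i) x"
    unfolding coord_prod_def by (subst prod.remove[of UNIV j]) (auto intro!: prod.cong)
  finally show "partial j (coord_prod F) x = coord_prod (\<lambda>i. if i = j then deriv (F i) else F i) x" .
qed

lemma partial_list_coord_prod:
  assumes "\<And>i. smooth (F i)"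
  shows "partial_list is (coord_prod F) = coord_prod (\<lambda>i. (deriv ^^ count_list is i) (F i))"
proof (induction "is")
  case (Cons j js)
  have "\<And>i t. (deriv ^^ count_list js i) (F i) differentiable (at t)"
    using assms smooth_funpow_deriv smooth_differentiable by blast
  then show ?case
    by (simp add: Cons partial_coord_prod) (auto intro!: arg_cong[where f=coord_prod])
qed simp

lemma test_fun_coord_prod:
  assumes "\<And>i. smooth (F i)"
    and "\<And>x. coord_prod F x \<noteq> 0 \<Longrightarrow> x \<in> cbox a b" and "cbox a b \<subseteq> \<Omega>"
  shows "test_fun \<Omega> (coord_prod F)"
  unfolding test_fun_def
proof (intro conjI allI)
  fix "is" x
  have "\<And>i t. (deriv ^^ count_list is i) (F i) differentiable (at t)"
    using assms(1) smooth_funpow_deriv smooth_differentiable by blast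
  then show "partial_list is (coord_prod F) differentiable (at x)"
    unfolding partial_list_coord_prod[OF assms(1)]
    by (intro differentiableI[OF coord_prod_has_derivative])
next
  have "closure {x. coord_prod F x \<noteq> 0} \<subseteq> cbox a b"
    using assms(2) by (intro closure_minimal) auto
  then show "compact (closure {x. coord_prod F x \<noteq> 0})"
    and "closure {x. coord_prod F x \<noteq> 0} \<subseteq> \<Omega>"
    using assms(3) compact_cbox closed_closure compact_Int_closed inf.absorb_iff2 by (metis, blast)
qed

definition box_bump :: "real \<Rightarrow> real^'n::finite \<Rightarrow> real^'n \<Rightarrow> real^'n \<Rightarrow> real" where
  "box_bump s a b = coord_prod (\<lambda>i. bump s (a$i) (b$i))"

lemma box_bump_nonneg: "0 \<le> box_bump s a b x"
  and box_bump_le_1: "box_bump s a b x \<le> 1"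
  unfolding box_bump_def coord_prod_def by (auto intro!: prod_nonneg prod_le_1 bump_nonneg bump_le_1)

lemma box_bump_eq_0:
  assumes "0 < s" "x \<notin> box a b"
  shows "box_bump s a b x = 0"
proof -
  obtain i where "x$i \<le> a$i \<or> b$i \<le> x$i"
    using assms(2) by (auto simp: mem_box_cart not_less)
  then have "bump s (a$i) (b$i) (x$i) = 0" by (rule bump_eq_0[OF assms(1)])
  then show ?thesis unfolding box_bump_def coord_prod_def by (auto intro: prod_zero)
qed

lemma test_fun_box_bump:
  assumes "0 < s" "cbox a b \<subseteq> \<Omega>"
  shows "test_fun \<Omega> (box_bump s a b)"
  unfolding box_bump_def
proof (rule test_fun_coord_prod[OF smooth_bump _ assms(2)])
  fix x assume "coord_prod (\<lambda>i. bump s (a$i) (b$i)) x \<noteq> 0"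
  then have "x \<in> box a b" using box_bump_eq_0[OF assms(1)] unfolding box_bump_def by blast
  then show "x \<in> cbox a b" using box_subset_cbox by blast
qed

lemma box_bump_tendsto_indicator:
  fixes a b :: "real^'n::finite"
  shows "(\<lambda>k. box_bump (real (Suc k)) a b x) \<longlonglongrightarrow> indicator (box a b) x"
proof (cases "x \<in> box a b")
  case True
  then have "(\<lambda>k. \<Prod>i\<in>UNIV. bump (real (Suc k)) (a$i) (b$i) (x$i)) \<longlonglongrightarrow> (\<Prod>i\<in>(UNIV::'n set). 1)"
    by (intro tendsto_prod bump_tendsto_1) (auto simp: mem_box_cart)
  then show ?thesis using True by (simp add: box_bump_def coord_prod_def)
qed (simp add: box_bump_eq_0)

lemma box_bump_bounded_below:
  assumes "cbox c d \<subseteq> box a b"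
  obtains m where "0 < m" "\<And>x. x \<in> cbox c d \<Longrightarrow> m \<le> box_bump 1 a b x"
proof (cases "cbox c d = {}")
  case False
  have "continuous_on (cbox c d) (box_bump 1 a b)"
    unfolding box_bump_def
    by (intro differentiable_imp_continuous_on differentiable_at_imp_differentiable_on
          differentiableI[OF coord_prod_has_derivative] smooth_differentiable smooth_bump)
  then obtain y where y: "y \<in> cbox c d" "\<And>x. x \<in> cbox c d \<Longrightarrow> box_bump 1 a b y \<le> box_bump 1 a b x"
    using continuous_attains_inf[OF compact_cbox False] by blast
  have "y \<in> box a b" using assms y(1) by blast
  then have "0 < box_bump 1 a b y"
    unfolding box_bump_def coord_prod_def
    by (intro prod_pos bump_pos) (auto simp: mem_box_cart)
  with y that show ?thesis by blast
qed (rule that[of 1], auto)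

section \<open>The fundamental lemma of the calculus of variations\<close>

lemma emeasure_density_box:
  fixes H :: "'a::euclidean_space \<Rightarrow> real"
  assumes int: "integrable lborel H"
  shows "emeasure (density lborel (\<lambda>x. ennreal (s * H x))) (box a b)
           = (\<integral>\<^sup>+x. ennreal (s * (H x * indicator (box a b) x)) \<partial>lborel)" (is "?N = ?I")
    and "emeasure (density lborel (\<lambda>x. ennreal (s * H x))) (box a b) < \<infinity>"
proof -
  have [measurable]: "H \<in> borel_measurable lborel" using int by simp
  show eq: "?N = ?I"
    by (subst emeasure_density) (auto intro!: nn_integral_cong simp: indicator_def)
  have "integrable lborel (\<lambda>x. s * (H x * indicator (box a b) x))"
    using int by (intro integrable_mult_right integrable_real_mult_indicator) auto
  then have "(\<integral>\<^sup>+x. ennreal (norm (s * (H x * indicator (box a b) x))) \<partial>lborel) < \<infinity>"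
    by (simp only: integrable_iff_bounded)
  moreover have "?I \<le> (\<integral>\<^sup>+x. ennreal (norm (s * (H x * indicator (box a b) x))) \<partial>lborel)"
    by (intro nn_integral_mono ennreal_leI) simp
  ultimately show "?N < \<infinity>"
    unfolding eq by (rule le_less_trans[rotated])
qed

text \<open>The positive and negative parts of \<open>H\<close> are densities of two measures that agree on
  all boxes, hence everywhere.\<close>

lemma AE_zero_of_box_integrals_lborel:
  fixes H :: "'a::euclidean_space \<Rightarrow> real"
  assumes int: "integrable lborel H"
    and box: "\<And>a b. (\<integral>x. H x * indicator (box a b) x \<partial>lborel) = 0"
  shows "AE x in lborel. H x = 0"
proof -
  have [measurable]: "H \<in> borel_measurable lborel" using int by simp
  define N where "N s = density lborel (\<lambda>x. ennreal (s * H x))" for s :: real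
  note N_box = emeasure_density_box[OF int, folded N_def]
  have "N 1 = N (-1)"
  proof (rule measure_eqI_generator_eq)
    let ?E = "range (\<lambda>(a, b). box a b :: 'a set)"
    show "Int_stable ?E"
      by (auto simp: Int_stable_def box_Int_box)
    show "?E \<subseteq> Pow UNIV" "sets (N 1) = sigma_sets UNIV ?E" "sets (N (-1)) = sigma_sets UNIV ?E"
      by (simp_all add: N_def borel_eq_box)
    let ?A = "\<lambda>n::nat. box (- (real n *\<^sub>R One)) (real n *\<^sub>R One) :: 'a set"
    show "range ?A \<subseteq> ?E" "(\<Union>i. ?A i) = UNIV"
      unfolding UN_box_eq_UNIV by auto
    show "emeasure (N 1) (?A i) \<noteq> \<infinity>" for i
      using N_box(2)[of 1 "- (real i *\<^sub>R One)" "real i *\<^sub>R One"] by simp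
    show "emeasure (N 1) X = emeasure (N (-1)) X" if "X \<in> ?E" for X
    proof -
      obtain a b where X: "X = box a b" using \<open>X \<in> ?E\<close> by auto
      have "integrable lborel (\<lambda>x. H x * indicator (box a b) x)"
        using int by (intro integrable_real_mult_indicator) auto
      then have eq: "enn2real (emeasure (N 1) X) = enn2real (emeasure (N (-1)) X)"
        using box[of a b] unfolding X N_box(1) by (simp add: real_lebesgue_integral_def)
      have "emeasure (N 1) X = ennreal (enn2real (emeasure (N 1) X))"
        unfolding X using N_box(2) by simp
      also have "\<dots> = ennreal (enn2real (emeasure (N (-1)) X))"
        by (simp only: eq)
      also have "\<dots> = emeasure (N (-1)) X"
        unfolding X using N_box(2) by simp
      finally show ?thesis .
    qed
  qed
  then have "AE x in lborel. ennreal (H x) = ennreal (- H x)"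
    unfolding N_def by (intro sigma_finite_measure.density_unique[OF sigma_finite_lborel]) auto
  then show ?thesis
  proof eventually_elim
    case (elim x)
    then show "H x = 0" by (cases "0 \<le> H x") (simp_all add: ennreal_neg)
  qed
qed

lemma AE_zero_of_box_integrals:
  fixes H :: "'a::euclidean_space \<Rightarrow> real"
  assumes int: "integrable lebesgue H"
    and box: "\<And>a b. (\<integral>x. H x * indicator (box a b) x \<partial>lebesgue) = 0"
  shows "AE x in lebesgue. H x = 0"
proof -
  have H: "H \<in> borel_measurable lebesgue" using int by auto
  then obtain H' where H'[measurable]: "H' \<in> borel_measurable lborel"
    and ae_lborel: "AE x in lborel. H x = H' x"
    using completion_ex_borel_measurable_real by blast
  have ae: "AE x in lebesgue. H x = H' x" using ae_lborel by (rule AE_completion)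
  have "integrable lebesgue H'"
    using integrable_cong_AE_imp[OF int measurable_completion[OF H'] ae] .
  then have int': "integrable lborel H'"
    using integrable_completion[OF H'] by simp
  have "AE x in lborel. H' x = 0"
  proof (rule AE_zero_of_box_integrals_lborel[OF int'])
    fix a b :: 'a
    have "(\<integral>x. H' x * indicator (box a b) x \<partial>lborel) = (\<integral>x. H' x * indicator (box a b) x \<partial>lebesgue)"
      by (rule integral_completion[symmetric]) measurable
    also have "\<dots> = (\<integral>x. H x * indicator (box a b) x \<partial>lebesgue)"
    proof (rule integral_cong_AE)
      have ind: "indicator (box a b) \<in> borel_measurable lebesgue"
        by (intro measurable_completion) simp
      show "(\<lambda>x. H' x * indicator (box a b) x) \<in> borel_measurable lebesgue"
        using measurable_completion[OF H'] ind by (rule borel_measurable_times)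
      show "(\<lambda>x. H x * indicator (box a b) x) \<in> borel_measurable lebesgue"
        using H ind by (rule borel_measurable_times)
    qed (use ae in auto)
    finally show "(\<integral>x. H' x * indicator (box a b) x \<partial>lborel) = 0" using box by simp
  qed
  then have "AE x in lebesgue. H' x = 0" by (rule AE_completion)
  with ae show ?thesis by eventually_elim simp
qed

lemma borel_measurable_indicator_lebesgue_on:
  fixes S :: "'a::euclidean_space set"
  assumes "A \<in> sets borel"
  shows "(indicator A :: 'a \<Rightarrow> real) \<in> borel_measurable (lebesgue_on S)"
  using assms by (intro measurable_restrict_space1 measurable_completion) simp

context
  fixes \<Omega> :: "(real^'n::finite) set" and g :: "real^'n \<Rightarrow> real"
  assumes g_meas: "g \<in> borel_measurable (lebesgue_on \<Omega>)"
    and g_test: "\<And>\<phi>. test_fun \<Omega> \<phi> \<Longrightarrow> integrable (lebesgue_on \<Omega>) (\<lambda>x. g x * \<phi> x) \<and>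
                                      (\<integral>x. g x * \<phi> x \<partial>lebesgue_on \<Omega>) = 0"
begin

lemma integrable_indicator_cbox_of_test_fun:
  assumes "cbox c d \<subseteq> box a b" "cbox a b \<subseteq> \<Omega>"
  shows "integrable (lebesgue_on \<Omega>) (\<lambda>x. g x * indicator (cbox c d) x)"
proof -
  obtain m where m: "0 < m" "\<And>x. x \<in> cbox c d \<Longrightarrow> m \<le> box_bump 1 a b x"
    using box_bump_bounded_below[OF assms(1)] by blast
  show ?thesis
  proof (rule Bochner_Integration.integrable_bound)
    show "integrable (lebesgue_on \<Omega>) (\<lambda>x. g x * box_bump 1 a b x / m)"
      using g_test[OF test_fun_box_bump[OF _ assms(2)]] by simp
    show "(\<lambda>x. g x * indicator (cbox c d) x) \<in> borel_measurable (lebesgue_on \<Omega>)"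
      by (intro borel_measurable_times g_meas borel_measurable_indicator_lebesgue_on) simp
    show "AE x in lebesgue_on \<Omega>. norm (g x * indicator (cbox c d) x) \<le> norm (g x * box_bump 1 a b x / m)"
    proof (rule AE_I2)
      fix x
      have "indicator (cbox c d) x \<le> box_bump 1 a b x / m"
        using m box_bump_nonneg[of 1 a b x] by (auto simp: indicator_def field_simps)
      then have "\<bar>g x\<bar> * indicator (cbox c d) x \<le> \<bar>g x\<bar> * (box_bump 1 a b x / m)"
        by (rule mult_left_mono) simp
      then show "norm (g x * indicator (cbox c d) x) \<le> norm (g x * box_bump 1 a b x / m)"
        using m(1) box_bump_nonneg[of 1 a b x] by (simp add: abs_mult)
    qed
  qed
qed

text \<open>Approximate the indicator of the box from below by the bumps \<open>box_bump k\<close> and pass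
  to the limit by dominated convergence.\<close>

lemma box_integral_zero_of_test_fun:
  assumes "cbox c d \<subseteq> box a b" "cbox a b \<subseteq> \<Omega>"
  shows "(\<integral>x. g x * indicator (box c d) x \<partial>lebesgue_on \<Omega>) = 0"
proof -
  define \<phi> where "\<phi> k = box_bump (real (Suc k)) c d" for k
  have "cbox c d \<subseteq> \<Omega>" using assms box_subset_cbox by blast
  then have \<phi>_test: "test_fun \<Omega> (\<phi> k)" for k
    unfolding \<phi>_def by (intro test_fun_box_bump) auto
  have "(\<lambda>k. \<integral>x. g x * \<phi> k x \<partial>lebesgue_on \<Omega>) \<longlonglongrightarrow> (\<integral>x. g x * indicator (box c d) x \<partial>lebesgue_on \<Omega>)"
  proof (rule integral_dominated_convergence[where w="\<lambda>x. \<bar>g x * indicator (cbox c d) x\<bar>"])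
    show "(\<lambda>x. g x * indicator (box c d) x) \<in> borel_measurable (lebesgue_on \<Omega>)"
      by (intro borel_measurable_times g_meas borel_measurable_indicator_lebesgue_on) simp
    show "(\<lambda>x. g x * \<phi> k x) \<in> borel_measurable (lebesgue_on \<Omega>)" for k
      using g_test[OF \<phi>_test] by auto
    show "integrable (lebesgue_on \<Omega>) (\<lambda>x. \<bar>g x * indicator (cbox c d) x\<bar>)"
      using integrable_indicator_cbox_of_test_fun[OF assms] by auto
    show "AE x in lebesgue_on \<Omega>. (\<lambda>k. g x * \<phi> k x) \<longlonglongrightarrow> g x * indicator (box c d) x"
      unfolding \<phi>_def by (intro AE_I2 tendsto_mult_left box_bump_tendsto_indicator)
    show "AE x in lebesgue_on \<Omega>. norm (g x * \<phi> k x) \<le> \<bar>g x * indicator (cbox c d) x\<bar>" for k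
    proof (rule AE_I2)
      fix x
      have "\<phi> k x \<le> indicator (cbox c d) x"
      proof (cases "x \<in> box c d")
        case True
        then have "x \<in> cbox c d" using box_subset_cbox by blast
        then show ?thesis using box_bump_le_1 by (simp add: \<phi>_def)
      qed (simp add: \<phi>_def box_bump_eq_0)
      then show "norm (g x * \<phi> k x) \<le> \<bar>g x * indicator (cbox c d) x\<bar>"
        by (auto simp: abs_mult \<phi>_def box_bump_nonneg intro!: mult_left_mono)
    qed
  qed
  moreover have "(\<integral>x. g x * \<phi> k x \<partial>lebesgue_on \<Omega>) = 0" for k
    using g_test[OF \<phi>_test] by blast
  ultimately have "(\<lambda>k. 0) \<longlonglongrightarrow> (\<integral>x. g x * indicator (box c d) x \<partial>lebesgue_on \<Omega>)"
    by simp
  then show ?thesis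
    using LIMSEQ_unique[OF tendsto_const] by metis
qed

lemma negligible_nonzero_in_box_of_test_fun:
  assumes \<Omega>: "open \<Omega>" and cd: "cbox c d \<subseteq> box a b" and ab: "cbox a b \<subseteq> \<Omega>"
  shows "negligible {x \<in> box c d. g x \<noteq> 0}"
proof -
  define H where "H x = indicator \<Omega> x *\<^sub>R (g x * indicator (box c d) x)" for x
  have "(\<lambda>x. g x * indicator (box c d) x) \<in> borel_measurable (lebesgue_on \<Omega>)"
    by (intro borel_measurable_times g_meas borel_measurable_indicator_lebesgue_on) simp
  with integrable_indicator_cbox_of_test_fun[OF cd ab]
  have "integrable (lebesgue_on \<Omega>) (\<lambda>x. g x * indicator (box c d) x)"
    by (rule Bochner_Integration.integrable_bound)
       (auto simp: abs_mult indicator_def box_subset_cbox[THEN subsetD])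
  then have "integrable lebesgue H"
    using \<Omega> unfolding H_def by (subst integrable_restrict_space[symmetric]) auto
  moreover have "(\<integral>x. H x * indicator (box a' b') x \<partial>lebesgue) = 0" for a' b'
  proof -
    define a'' where "a'' = (\<chi> i. max (a'$i) (c$i))"
    define b'' where "b'' = (\<chi> i. min (b'$i) (d$i))"
    have "box a' b' \<inter> box c d = box a'' b''"
      by (auto simp: mem_box_cart a''_def b''_def)
    then have "(\<integral>x. H x * indicator (box a' b') x \<partial>lebesgue)
        = (\<integral>x. indicator \<Omega> x *\<^sub>R (g x * indicator (box a'' b'') x) \<partial>lebesgue)"
      by (intro Bochner_Integration.integral_cong) (auto simp: H_def indicator_def)
    also have "\<dots> = (\<integral>x. g x * indicator (box a'' b'') x \<partial>lebesgue_on \<Omega>)"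
      using \<Omega> by (intro integral_restrict_space[symmetric]) auto
    also have "\<dots> = 0"
    proof (rule box_integral_zero_of_test_fun[OF _ ab])
      have "cbox a'' b'' \<subseteq> cbox c d"
        by (auto simp: mem_box_cart a''_def b''_def)
      then show "cbox a'' b'' \<subseteq> box a b" using cd by blast
    qed
    finally show ?thesis .
  qed
  ultimately have "AE x in lebesgue. H x = 0"
    by (rule AE_zero_of_box_integrals)
  then obtain N where N: "{x \<in> space lebesgue. H x \<noteq> 0} \<subseteq> N" "N \<in> null_sets lebesgue"
    by (auto elim!: AE_E simp: null_sets_def)
  have "box c d \<subseteq> \<Omega>"
    using cd ab box_subset_cbox by blast
  then have "{x \<in> box c d. g x \<noteq> 0} \<subseteq> {x \<in> space lebesgue. H x \<noteq> 0}"
    by (auto simp: H_def)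
  moreover have "negligible N"
    using N(2) by (simp add: negligible_iff_null_sets)
  ultimately show ?thesis
    using N(1) negligible_subset by blast
qed

lemma AE_zero_of_test_fun:
  assumes \<Omega>: "open \<Omega>"
  shows "AE x in lebesgue_on \<Omega>. g x = 0"
proof -
  define S where "S = {x \<in> \<Omega>. g x \<noteq> 0}"
  have "negligible S"
  proof (rule locally_negligible_alt[THEN iffD2], intro ballI)
    fix x assume "x \<in> S"
    then have "x \<in> \<Omega>" by (simp add: S_def)
    then obtain a b where ab: "cbox a b \<subseteq> \<Omega>" "x \<in> box a b"
      by (rule open_contains_cbox[OF \<Omega>])
    obtain c d where cd: "cbox c d \<subseteq> box a b" "x \<in> box c d"
      by (rule open_contains_cbox[OF open_box ab(2)])
    have "negligible {x \<in> box c d. g x \<noteq> 0}"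
      by (rule negligible_nonzero_in_box_of_test_fun[OF \<Omega> cd(1) ab(1)])
    then have "negligible (S \<inter> box c d)"
      by (rule negligible_subset) (auto simp: S_def)
    then show "\<exists>U. openin (top_of_set S) U \<and> x \<in> U \<and> negligible U"
      using \<open>x \<in> S\<close> cd(2) by (intro exI[of _ "S \<inter> box c d"]) (auto intro: openin_open_Int)
  qed
  then have "AE x in lebesgue. x \<notin> S"
    by (simp add: negligible_iff_null_sets AE_not_in)
  then show ?thesis
    using \<Omega> by (subst AE_restrict_space_iff) (auto simp: S_def elim!: eventually_mono)
qed

end

lemma weak_deriv_unique:
  assumes "open \<Omega>" "weak_deriv \<Omega> is u g1" "weak_deriv \<Omega> is u g2"
  shows "AE x in lebesgue_on \<Omega>. g1 x = g2 x"
proof -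
  have "AE x in lebesgue_on \<Omega>. g1 x - g2 x = 0"
  proof (rule AE_zero_of_test_fun[OF _ _ assms(1)])
    show "(\<lambda>x. g1 x - g2 x) \<in> borel_measurable (lebesgue_on \<Omega>)"
      using assms unfolding weak_deriv_def by auto
    fix \<phi> assume "test_fun \<Omega> \<phi>"
    then show "integrable (lebesgue_on \<Omega>) (\<lambda>x. (g1 x - g2 x) * \<phi> x) \<and>
               (\<integral>x. (g1 x - g2 x) * \<phi> x \<partial>lebesgue_on \<Omega>) = 0"
      using assms(2,3) unfolding weak_deriv_def left_diff_distrib by auto
  qed
  then show ?thesis by eventually_elim simp
qed

section \<open>Weak gradients of \<open>H\<^sup>1\<close> functions\<close>

lemma weak_deriv_lin_comb:
  assumes u: "weak_deriv \<Omega> is u gu" and w: "weak_deriv \<Omega> is w gw"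
  shows "weak_deriv \<Omega> is (\<lambda>x. s * u x + t * w x) (\<lambda>x. s * gu x + t * gw x)"
  unfolding weak_deriv_def
proof (intro conjI allI impI)
  show "(\<lambda>x. s * u x + t * w x) \<in> borel_measurable (lebesgue_on \<Omega>)"
    and "(\<lambda>x. s * gu x + t * gw x) \<in> borel_measurable (lebesgue_on \<Omega>)"
    using u w unfolding weak_deriv_def by auto
  fix \<phi> assume "test_fun \<Omega> \<phi>"
  then have U: "integrable (lebesgue_on \<Omega>) (\<lambda>x. u x * partial_list is \<phi> x)"
      "integrable (lebesgue_on \<Omega>) (\<lambda>x. gu x * \<phi> x)"
      "(\<integral>x. u x * partial_list is \<phi> x \<partial>lebesgue_on \<Omega>) = (-1) ^ length is * (\<integral>x. gu x * \<phi> x \<partial>lebesgue_on \<Omega>)"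
    and W: "integrable (lebesgue_on \<Omega>) (\<lambda>x. w x * partial_list is \<phi> x)"
      "integrable (lebesgue_on \<Omega>) (\<lambda>x. gw x * \<phi> x)"
      "(\<integral>x. w x * partial_list is \<phi> x \<partial>lebesgue_on \<Omega>) = (-1) ^ length is * (\<integral>x. gw x * \<phi> x \<partial>lebesgue_on \<Omega>)"
    using u w unfolding weak_deriv_def by blast+
  have distrib: "\<And>a b c :: real. (s * a + t * b) * c = s * (a * c) + t * (b * c)"
    by (simp add: algebra_simps)
  show "integrable (lebesgue_on \<Omega>) (\<lambda>x. (s * u x + t * w x) * partial_list is \<phi> x)"
    and "integrable (lebesgue_on \<Omega>) (\<lambda>x. (s * gu x + t * gw x) * \<phi> x)"
    unfolding distrib using U W by auto
  show "(\<integral>x. (s * u x + t * w x) * partial_list is \<phi> x \<partial>lebesgue_on \<Omega>)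
      = (-1) ^ length is * (\<integral>x. (s * gu x + t * gw x) * \<phi> x \<partial>lebesgue_on \<Omega>)"
    unfolding distrib using U W by (simp add: algebra_simps)
qed

lemma weak_deriv_weak_grad_nth:
  assumes "weak_deriv \<Omega> [i] v g"
  shows "weak_deriv \<Omega> [i] v (\<lambda>x. weak_grad \<Omega> v x $ i)"
  using someI[where P = "weak_deriv \<Omega> [i] v", OF assms] by (simp add: weak_grad_def)

lemma weak_grad_nth_AE:
  assumes "open \<Omega>" "weak_deriv \<Omega> [i] v g"
  shows "AE x in lebesgue_on \<Omega>. weak_grad \<Omega> v x $ i = g x"
  by (rule weak_deriv_unique[OF assms(1) weak_deriv_weak_grad_nth[OF assms(2)] assms(2)])

lemma weak_grad_segment_AE:
  assumes \<Omega>: "open \<Omega>" and u: "u \<in> H1 \<Omega>" and v: "v \<in> H1 \<Omega>"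
  shows "AE x in lebesgue_on \<Omega>.
           weak_grad \<Omega> (\<lambda>x. u x + t * (v x - u x)) x = weak_grad \<Omega> u x + t *\<^sub>R (weak_grad \<Omega> v x - weak_grad \<Omega> u x)"
proof -
  have "AE x in lebesgue_on \<Omega>. weak_grad \<Omega> (\<lambda>x. u x + t * (v x - u x)) x $ i
          = (1 - t) * weak_grad \<Omega> u x $ i + t * weak_grad \<Omega> v x $ i" for i
  proof -
    obtain gu gv where "weak_deriv \<Omega> [i] u gu" "weak_deriv \<Omega> [i] v gv"
      using u v unfolding H1_def by blast
    then have "weak_deriv \<Omega> [i] (\<lambda>x. (1 - t) * u x + t * v x)
                 (\<lambda>x. (1 - t) * weak_grad \<Omega> u x $ i + t * weak_grad \<Omega> v x $ i)"
      by (intro weak_deriv_lin_comb weak_deriv_weak_grad_nth)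
    moreover have "(\<lambda>x. (1 - t) * u x + t * v x) = (\<lambda>x. u x + t * (v x - u x))"
      by (simp add: algebra_simps)
    ultimately show ?thesis
      using weak_grad_nth_AE[OF \<Omega>] by simp
  qed
  then have "AE x in lebesgue_on \<Omega>. \<forall>i\<in>UNIV. weak_grad \<Omega> (\<lambda>x. u x + t * (v x - u x)) x $ i
          = (1 - t) * weak_grad \<Omega> u x $ i + t * weak_grad \<Omega> v x $ i"
    by (intro AE_finite_allI) simp_all
  then show ?thesis
    by eventually_elim (simp add: vec_eq_iff algebra_simps)
qed

lemma weak_grad_zero_AE:
  assumes "open \<Omega>"
  shows "AE x in lebesgue_on \<Omega>. weak_grad \<Omega> (\<lambda>x. 0) x = 0"
proof -
  have "AE x in lebesgue_on \<Omega>. \<forall>i\<in>UNIV. weak_grad \<Omega> (\<lambda>x. 0) x $ i = 0"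
    by (intro AE_finite_allI weak_grad_nth_AE[OF assms]) (simp_all add: weak_deriv_def)
  then show ?thesis
    by eventually_elim (simp add: vec_eq_iff)
qed

definition square_integrable :: "'a measure \<Rightarrow> ('a \<Rightarrow> real) \<Rightarrow> bool" where
  "square_integrable M f \<longleftrightarrow> f \<in> borel_measurable M \<and> integrable M (\<lambda>x. (f x)\<^sup>2)"

lemma set_nn_integral_eq_nn_integral_restrict:
  "\<Omega> \<in> sets lebesgue \<Longrightarrow> set_nn_integral lebesgue \<Omega> f = (\<integral>\<^sup>+x. f x \<partial>lebesgue_on \<Omega>)"
  by (simp add: nn_integral_restrict_space)

lemma L2_imp_square_integrable:
  assumes "\<Omega> \<in> sets lebesgue" "L2 \<Omega> f"
  shows "square_integrable (lebesgue_on \<Omega>) f"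
  using assms unfolding square_integrable_def L2_def
  by (auto simp: integrable_iff_bounded set_nn_integral_eq_nn_integral_restrict)

lemma square_integrable_AE_cong:
  assumes "square_integrable M f" "g \<in> borel_measurable M" "AE x in M. f x = g x"
  shows "square_integrable M g"
proof -
  have "AE x in M. (f x)\<^sup>2 = (g x)\<^sup>2"
    using assms(3) by eventually_elim simp
  then show ?thesis
    using assms(1,2) integrable_cong_AE[of "\<lambda>x. (f x)\<^sup>2" M "\<lambda>x. (g x)\<^sup>2"]
    unfolding square_integrable_def by auto
qed

lemma integrable_mult_square_integrable:
  assumes "square_integrable M f" "square_integrable M g"
  shows "integrable M (\<lambda>x. f x * g x)"
proof (rule Bochner_Integration.integrable_bound)
  show "integrable M (\<lambda>x. (f x)\<^sup>2 + (g x)\<^sup>2)"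
    using assms unfolding square_integrable_def by auto
  show "(\<lambda>x. f x * g x) \<in> borel_measurable M"
    using assms unfolding square_integrable_def by auto
  have "\<bar>f x * g x\<bar> \<le> (f x)\<^sup>2 + (g x)\<^sup>2" for x
  proof -
    have "2 * (\<bar>f x\<bar> * \<bar>g x\<bar>) \<le> (f x)\<^sup>2 + (g x)\<^sup>2"
      using sum_squares_bound[of "\<bar>f x\<bar>" "\<bar>g x\<bar>"] by (simp add: mult.assoc)
    moreover have "0 \<le> \<bar>f x\<bar> * \<bar>g x\<bar>" by simp
    ultimately show ?thesis
      unfolding abs_mult by linarith
  qed
  then show "AE x in M. norm (f x * g x) \<le> norm ((f x)\<^sup>2 + (g x)\<^sup>2)"
    by simp
qed

lemma square_integrable_diff:
  assumes "square_integrable M f" "square_integrable M g"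
  shows "square_integrable M (\<lambda>x. f x - g x)"
proof -
  have "integrable M (\<lambda>x. (f x)\<^sup>2 - 2 * (f x * g x) + (g x)\<^sup>2)"
    using assms integrable_mult_square_integrable[OF assms] unfolding square_integrable_def by auto
  moreover have "(\<lambda>x. (f x)\<^sup>2 - 2 * (f x * g x) + (g x)\<^sup>2) = (\<lambda>x. (f x - g x)\<^sup>2)"
    by (simp add: power2_diff algebra_simps)
  ultimately show ?thesis
    using assms unfolding square_integrable_def by auto
qed

lemma square_integrable_weak_grad_nth:
  assumes \<Omega>: "open \<Omega>" and v: "v \<in> H1 \<Omega>"
  shows "square_integrable (lebesgue_on \<Omega>) (\<lambda>x. weak_grad \<Omega> v x $ i)"
proof -
  obtain g where g: "weak_deriv \<Omega> [i] v g" "L2 \<Omega> g"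
    using v unfolding H1_def by blast
  have "(\<lambda>x. weak_grad \<Omega> v x $ i) \<in> borel_measurable (lebesgue_on \<Omega>)"
    using weak_deriv_weak_grad_nth[OF g(1)] unfolding weak_deriv_def by blast
  moreover have "AE x in lebesgue_on \<Omega>. g x = weak_grad \<Omega> v x $ i"
    using weak_grad_nth_AE[OF \<Omega> g(1)] by eventually_elim simp
  ultimately show ?thesis
    using \<Omega> g(2) by (intro square_integrable_AE_cong[OF L2_imp_square_integrable]) auto
qed

lemma integrable_bounded_mult:
  fixes a h :: "'a \<Rightarrow> real"
  assumes "a \<in> borel_measurable M" "\<And>x. x \<in> space M \<Longrightarrow> \<bar>a x\<bar> \<le> K" "integrable M h"
  shows "integrable M (\<lambda>x. a x * h x)"
proof (rule Bochner_Integration.integrable_bound)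
  show "integrable M (\<lambda>x. K * h x)" using assms(3) by simp
  show "(\<lambda>x. a x * h x) \<in> borel_measurable M" using assms by auto
  have "\<bar>a x\<bar> * \<bar>h x\<bar> \<le> \<bar>K\<bar> * \<bar>h x\<bar>" if "x \<in> space M" for x
    using assms(2)[OF that] by (intro mult_right_mono) auto
  then show "AE x in M. norm (a x * h x) \<le> norm (K * h x)"
    by (intro AE_I2) (simp add: abs_mult)
qed

lemma borel_measurable_vec_nth:
  fixes f :: "'a \<Rightarrow> 'b::real_normed_vector^'n::finite"
  shows "f \<in> borel_measurable M \<Longrightarrow> (\<lambda>x. f x $ i) \<in> borel_measurable M"
  by (erule measurable_compose[OF _ borel_measurable_continuous_onI])
     (intro linear_continuous_on bounded_linear_vec_nth)

lemma integrable_norm_power2_vec: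
  fixes Y :: "'a \<Rightarrow> real^'n::finite"
  assumes "\<And>i. square_integrable M (\<lambda>x. Y x $ i)"
  shows "integrable M (\<lambda>x. (norm (Y x))\<^sup>2)"
proof -
  have "(\<lambda>x. (norm (Y x))\<^sup>2) = (\<lambda>x. \<Sum>i\<in>UNIV. (Y x $ i)\<^sup>2)"
    unfolding power2_norm_eq_inner inner_vec_def by (simp add: power2_eq_square)
  then show ?thesis
    using assms unfolding square_integrable_def by simp
qed

lemma integrable_matrix_form:
  fixes A :: "'a \<Rightarrow> real^'n::finite^'n" and Y Z :: "'a \<Rightarrow> real^'n"
  assumes A: "A \<in> borel_measurable M" "\<And>x. x \<in> space M \<Longrightarrow> norm (A x) \<le> K"
    and Y: "\<And>i. square_integrable M (\<lambda>x. Y x $ i)" and Z: "\<And>i. square_integrable M (\<lambda>x. Z x $ i)"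
  shows "integrable M (\<lambda>x. (A x *v Y x) \<bullet> Z x)"
proof -
  have "integrable M (\<lambda>x. A x $ i $ j * (Y x $ j * Z x $ i))" for i j
  proof (rule integrable_bounded_mult)
    show "(\<lambda>x. A x $ i $ j) \<in> borel_measurable M"
      by (intro borel_measurable_vec_nth A(1))
    show "\<bar>A x $ i $ j\<bar> \<le> K" if "x \<in> space M" for x
      using component_le_norm_cart[of "A x $ i" j] Finite_Cartesian_Product.norm_nth_le[of "A x" i]
        A(2)[OF that]
      by linarith
    show "integrable M (\<lambda>x. Y x $ j * Z x $ i)"
      by (rule integrable_mult_square_integrable[OF Y Z])
  qed
  moreover have "(A x *v Y x) \<bullet> Z x = (\<Sum>i\<in>UNIV. \<Sum>j\<in>UNIV. A x $ i $ j * (Y x $ j * Z x $ i))" for x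
    by (simp add: inner_vec_def matrix_vector_mult_def sum_distrib_right mult.assoc)
  ultimately show ?thesis by simp
qed

lemma grad_dist2_eq_integral:
  assumes \<Omega>: "open \<Omega>" and "u \<in> H1 \<Omega>" "v \<in> H1 \<Omega>"
  shows "integrable (lebesgue_on \<Omega>) (\<lambda>x. (norm (weak_grad \<Omega> u x - weak_grad \<Omega> v x))\<^sup>2)"
    and "grad_dist2 \<Omega> u v = ennreal (\<integral>x. (norm (weak_grad \<Omega> u x - weak_grad \<Omega> v x))\<^sup>2 \<partial>lebesgue_on \<Omega>)"
proof -
  show int: "integrable (lebesgue_on \<Omega>) (\<lambda>x. (norm (weak_grad \<Omega> u x - weak_grad \<Omega> v x))\<^sup>2)"
    using assms by (intro integrable_norm_power2_vec)
                   (simp add: square_integrable_diff square_integrable_weak_grad_nth)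
  show "grad_dist2 \<Omega> u v = ennreal (\<integral>x. (norm (weak_grad \<Omega> u x - weak_grad \<Omega> v x))\<^sup>2 \<partial>lebesgue_on \<Omega>)"
    using \<Omega> unfolding grad_dist2_def
    by (simp add: set_nn_integral_eq_nn_integral_restrict nn_integral_eq_integral[OF int])
qed

lemma grad_dist2_triangle:
  assumes \<Omega>: "open \<Omega>" and in_H1: "u \<in> H1 \<Omega>" "v \<in> H1 \<Omega>" "w \<in> H1 \<Omega>"
  shows "grad_dist2 \<Omega> u w \<le> 2 * grad_dist2 \<Omega> u v + 2 * grad_dist2 \<Omega> v w"
proof -
  let ?M = "lebesgue_on \<Omega>"
  let ?d = "\<lambda>u v x. (norm (weak_grad \<Omega> u x - weak_grad \<Omega> v x))\<^sup>2"
  have "?d u w x \<le> 2 * ?d u v x + 2 * ?d v w x" for x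
  proof -
    let ?p = "norm (weak_grad \<Omega> u x - weak_grad \<Omega> v x)" and ?q = "norm (weak_grad \<Omega> v x - weak_grad \<Omega> w x)"
    have "norm (weak_grad \<Omega> u x - weak_grad \<Omega> w x) \<le> ?p + ?q"
      using dist_triangle[of "weak_grad \<Omega> u x" "weak_grad \<Omega> w x" "weak_grad \<Omega> v x"]
      by (simp add: dist_norm)
    then have "?d u w x \<le> (?p + ?q)\<^sup>2"
      by (intro power_mono) auto
    also have "\<dots> \<le> 2 * ?p\<^sup>2 + 2 * ?q\<^sup>2"
      using sum_squares_bound[of ?p ?q] by (simp add: power2_sum)
    finally show ?thesis .
  qed
  then have "(\<integral>x. ?d u w x \<partial>?M) \<le> (\<integral>x. 2 * ?d u v x + 2 * ?d v w x \<partial>?M)"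
    using grad_dist2_eq_integral(1)[OF \<Omega>] in_H1 by (intro integral_mono) auto
  also have "\<dots> = 2 * (\<integral>x. ?d u v x \<partial>?M) + 2 * (\<integral>x. ?d v w x \<partial>?M)"
    using grad_dist2_eq_integral(1)[OF \<Omega>] in_H1 by simp
  finally have "ennreal (\<integral>x. ?d u w x \<partial>?M)
      \<le> ennreal (2 * (\<integral>x. ?d u v x \<partial>?M) + 2 * (\<integral>x. ?d v w x \<partial>?M))"
    by (rule ennreal_leI)
  also have "\<dots> = 2 * ennreal (\<integral>x. ?d u v x \<partial>?M) + 2 * ennreal (\<integral>x. ?d v w x \<partial>?M)"
    by (simp add: ennreal_plus ennreal_mult)
  finally show ?thesis
    using in_H1 by (simp add: grad_dist2_eq_integral(2)[OF \<Omega>])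
qed

section \<open>Energy gaps on subspaces of \<open>H\<^sup>1\<close>\<close>

lemma lin_subspace_segment:
  assumes W: "lin_subspace W" and "u \<in> W" "v \<in> W"
  shows "(\<lambda>x. u x + t * (v x - u x)) \<in> W"
proof -
  have add: "\<And>f g. f \<in> W \<Longrightarrow> g \<in> W \<Longrightarrow> (\<lambda>x. f x + g x) \<in> W"
    and smult: "\<And>c f. f \<in> W \<Longrightarrow> (\<lambda>x. c * f x) \<in> W"
    using W unfolding lin_subspace_def by blast+
  have "(\<lambda>x. (1 - t) * u x + t * v x) \<in> W"
    using assms(2,3) by (intro add smult)
  moreover have "(\<lambda>x. (1 - t) * u x + t * v x) = (\<lambda>x. u x + t * (v x - u x))"
    by (simp add: algebra_simps)
  ultimately show ?thesis by simp
qed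

lemma poly_deg_add:
  assumes "poly_deg p q1" "poly_deg p q2"
  shows "poly_deg p (\<lambda>x. q1 x + q2 x)"
proof -
  obtain c1 c2 where "q1 = (\<lambda>x. \<Sum>\<alpha>\<in>{\<alpha>. sum \<alpha> UNIV \<le> p}. c1 \<alpha> * (\<Prod>i\<in>UNIV. (x $ i) ^ \<alpha> i))"
    and "q2 = (\<lambda>x. \<Sum>\<alpha>\<in>{\<alpha>. sum \<alpha> UNIV \<le> p}. c2 \<alpha> * (\<Prod>i\<in>UNIV. (x $ i) ^ \<alpha> i))"
    using assms unfolding poly_deg_def by blast
  then show ?thesis
    unfolding poly_deg_def by (intro exI[of _ "\<lambda>\<alpha>. c1 \<alpha> + c2 \<alpha>"]) (simp add: distrib_right sum.distrib)
qed

lemma poly_deg_cmult: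
  assumes "poly_deg p q"
  shows "poly_deg p (\<lambda>x. c * q x)"
proof -
  obtain c1 where "q = (\<lambda>x. \<Sum>\<alpha>\<in>{\<alpha>. sum \<alpha> UNIV \<le> p}. c1 \<alpha> * (\<Prod>i\<in>UNIV. (x $ i) ^ \<alpha> i))"
    using assms unfolding poly_deg_def by blast
  then show ?thesis
    unfolding poly_deg_def by (intro exI[of _ "\<lambda>\<alpha>. c * c1 \<alpha>"]) (simp add: sum_distrib_left mult.assoc)
qed

lemma lin_subspace_lagrange_fe:
  assumes "lin_subspace V"
  shows "lin_subspace (lagrange_fe \<Omega> T p V)"
  unfolding lin_subspace_def
proof (intro conjI ballI allI)
  have "poly_deg p (\<lambda>x::real^'a. 0)"
    unfolding poly_deg_def by (intro exI[of _ "\<lambda>\<alpha>. 0"]) simp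
  then show "(\<lambda>x. 0) \<in> lagrange_fe \<Omega> T p V"
    using assms unfolding lin_subspace_def lagrange_fe_def by auto
next
  fix v w assume v: "v \<in> lagrange_fe \<Omega> T p V" and w: "w \<in> lagrange_fe \<Omega> T p V"
  show "(\<lambda>x. v x + w x) \<in> lagrange_fe \<Omega> T p V"
    unfolding lagrange_fe_def
  proof (intro CollectI conjI ballI)
    show "(\<lambda>x. v x + w x) \<in> V"
      using assms v w unfolding lin_subspace_def lagrange_fe_def by blast
    show "continuous_on (closure \<Omega>) (\<lambda>x. v x + w x)"
      using v w unfolding lagrange_fe_def by (auto intro: continuous_on_add)
    fix K assume "K \<in> T"
    then obtain q1 q2 where "poly_deg p q1" "\<forall>x\<in>K. v x = q1 x" "poly_deg p q2" "\<forall>x\<in>K. w x = q2 x"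
      using v w unfolding lagrange_fe_def by blast
    then show "\<exists>q. poly_deg p q \<and> (\<forall>x\<in>K. v x + w x = q x)"
      by (intro exI[of _ "\<lambda>x. q1 x + q2 x"]) (simp add: poly_deg_add)
  qed
next
  fix c v assume v: "v \<in> lagrange_fe \<Omega> T p V"
  show "(\<lambda>x. c * v x) \<in> lagrange_fe \<Omega> T p V"
    unfolding lagrange_fe_def
  proof (intro CollectI conjI ballI)
    show "(\<lambda>x. c * v x) \<in> V"
      using assms v unfolding lin_subspace_def lagrange_fe_def by blast
    show "continuous_on (closure \<Omega>) (\<lambda>x. c * v x)"
      using v unfolding lagrange_fe_def by (auto intro: continuous_on_mult_left)
    fix K assume "K \<in> T"
    then obtain q where "poly_deg p q" "\<forall>x\<in>K. v x = q x"
      using v unfolding lagrange_fe_def by blast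
    then show "\<exists>q. poly_deg p q \<and> (\<forall>x\<in>K. c * v x = q x)"
      by (intro exI[of _ "\<lambda>x. c * q x"]) (simp add: poly_deg_cmult)
  qed
qed

definition matrix_form ::
    "(real^'n::finite) set \<Rightarrow> (real^'n \<Rightarrow> real^'n^'n) \<Rightarrow> (real^'n \<Rightarrow> real^'n) \<Rightarrow> (real^'n \<Rightarrow> real^'n) \<Rightarrow> real" where
  "matrix_form \<Omega> A Y Z = (\<integral>x. (A x *v Y x) \<bullet> Z x \<partial>lebesgue_on \<Omega>)"

lemma matrix_form_weak_grad_segment:
  fixes A :: "real^'n::finite \<Rightarrow> real^'n^'n"
  assumes \<Omega>: "open \<Omega>" and A_meas: "A \<in> borel_measurable (lebesgue_on \<Omega>)" and A_bdd: "bounded (A ` \<Omega>)"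
    and in_H1: "u \<in> H1 \<Omega>" "v \<in> H1 \<Omega>" "(\<lambda>x. u x + t * (v x - u x)) \<in> H1 \<Omega>"
  defines "G \<equiv> weak_grad \<Omega> u" and "Z \<equiv> \<lambda>x. weak_grad \<Omega> v x - weak_grad \<Omega> u x"
  shows "matrix_form \<Omega> A (weak_grad \<Omega> (\<lambda>x. u x + t * (v x - u x))) (weak_grad \<Omega> (\<lambda>x. u x + t * (v x - u x)))
           = matrix_form \<Omega> A G G + t * (matrix_form \<Omega> A G Z + matrix_form \<Omega> A Z G) + t\<^sup>2 * matrix_form \<Omega> A Z Z"
proof -
  let ?M = "lebesgue_on \<Omega>"
  let ?w = "\<lambda>x. u x + t * (v x - u x)"
  obtain K where K: "\<And>x. x \<in> space ?M \<Longrightarrow> norm (A x) \<le> K"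
    using A_bdd unfolding bounded_iff by auto
  have form: "integrable ?M (\<lambda>x. (A x *v Y x) \<bullet> Y' x)"
    if "\<And>i. square_integrable ?M (\<lambda>x. Y x $ i)" "\<And>i. square_integrable ?M (\<lambda>x. Y' x $ i)" for Y Y'
    using integrable_matrix_form[OF A_meas K that] .
  have G2: "square_integrable ?M (\<lambda>x. G x $ i)" for i
    unfolding G_def by (rule square_integrable_weak_grad_nth[OF \<Omega> in_H1(1)])
  have Z2: "square_integrable ?M (\<lambda>x. Z x $ i)" for i
    unfolding Z_def using square_integrable_weak_grad_nth[OF \<Omega>] in_H1 by (simp add: square_integrable_diff)
  have W2: "square_integrable ?M (\<lambda>x. weak_grad \<Omega> ?w x $ i)" for i
    by (rule square_integrable_weak_grad_nth[OF \<Omega> in_H1(3)])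
  have "AE x in ?M. weak_grad \<Omega> ?w x = G x + t *\<^sub>R Z x"
    using weak_grad_segment_AE[OF \<Omega> in_H1(1,2)] unfolding G_def Z_def .
  then have "AE x in ?M. (A x *v weak_grad \<Omega> ?w x) \<bullet> weak_grad \<Omega> ?w x
      = (A x *v G x) \<bullet> G x + t * ((A x *v G x) \<bullet> Z x + (A x *v Z x) \<bullet> G x) + t\<^sup>2 * ((A x *v Z x) \<bullet> Z x)"
    by eventually_elim
       (simp add: matrix_vector_right_distrib matrix_vector_mult_scaleR inner_add_left
                  inner_add_right power2_eq_square algebra_simps)
  then have "matrix_form \<Omega> A (weak_grad \<Omega> ?w) (weak_grad \<Omega> ?w)
      = (\<integral>x. (A x *v G x) \<bullet> G x + t * ((A x *v G x) \<bullet> Z x + (A x *v Z x) \<bullet> G x)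
             + t\<^sup>2 * ((A x *v Z x) \<bullet> Z x) \<partial>?M)"
    unfolding matrix_form_def
    using form G2 Z2 form[OF W2 W2] by (intro integral_cong_AE) auto
  also have "\<dots> = matrix_form \<Omega> A G G + t * (matrix_form \<Omega> A G Z + matrix_form \<Omega> A Z G) + t\<^sup>2 * matrix_form \<Omega> A Z Z"
    using form G2 Z2 by (simp add: matrix_form_def)
  finally show ?thesis .
qed

lemma quadratic_energy_along_segment:
  fixes A :: "real^'n::finite \<Rightarrow> real^'n^'n" and E :: "(real^'n \<Rightarrow> real) \<Rightarrow> real"
  assumes \<Omega>: "open \<Omega>" and f: "L2 \<Omega> f"
    and A_meas: "A \<in> borel_measurable (lebesgue_on \<Omega>)" and A_bdd: "bounded (A ` \<Omega>)"
    and E: "\<forall>w\<in>W. E w = 1/2 * (\<integral>x. (A x *v weak_grad \<Omega> w x) \<bullet> weak_grad \<Omega> w x \<partial>lebesgue_on \<Omega>)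
                        - (\<integral>x. f x * w x \<partial>lebesgue_on \<Omega>)"
    and W: "lin_subspace W" "W \<subseteq> H1 \<Omega>" and u: "u \<in> W" and v: "v \<in> W"
  shows "\<exists>b. \<forall>t. E (\<lambda>x. u x + t * (v x - u x)) = E u + t * b
           + t\<^sup>2 / 2 * matrix_form \<Omega> A (\<lambda>x. weak_grad \<Omega> v x - weak_grad \<Omega> u x) (\<lambda>x. weak_grad \<Omega> v x - weak_grad \<Omega> u x)"
proof -
  let ?M = "lebesgue_on \<Omega>"
  let ?Q = "matrix_form \<Omega> A"
  let ?G = "weak_grad \<Omega> u" and ?Z = "\<lambda>x. weak_grad \<Omega> v x - weak_grad \<Omega> u x"
  define Fu where "Fu = (\<integral>x. f x * u x \<partial>?M)"
  define Fv where "Fv = (\<integral>x. f x * v x \<partial>?M)"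
  have uH: "u \<in> H1 \<Omega>" and vH: "v \<in> H1 \<Omega>" using W u v by auto
  have Eu: "E u = 1/2 * ?Q ?G ?G - Fu"
    using E u by (simp add: matrix_form_def Fu_def)
  have "E (\<lambda>x. u x + t * (v x - u x)) = E u + t * ((?Q ?G ?Z + ?Q ?Z ?G) / 2 - (Fv - Fu)) + t\<^sup>2 / 2 * ?Q ?Z ?Z"
    for t
  proof -
    have w: "(\<lambda>x. u x + t * (v x - u x)) \<in> W"
      by (rule lin_subspace_segment[OF W(1) u v])
    have "integrable ?M (\<lambda>x. f x * u x)" "integrable ?M (\<lambda>x. f x * v x)"
      using \<Omega> f uH vH by (auto intro!: integrable_mult_square_integrable L2_imp_square_integrable simp: H1_def)
    moreover have "(\<lambda>x. f x * (u x + t * (v x - u x))) = (\<lambda>x. f x * u x + t * (f x * v x - f x * u x))"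
      by (auto simp: algebra_simps)
    ultimately have "(\<integral>x. f x * (u x + t * (v x - u x)) \<partial>?M) = Fu + t * (Fv - Fu)"
      by (simp add: Fu_def Fv_def)
    then have "E (\<lambda>x. u x + t * (v x - u x))
        = 1/2 * (?Q ?G ?G + t * (?Q ?G ?Z + ?Q ?Z ?G) + t\<^sup>2 * ?Q ?Z ?Z) - (Fu + t * (Fv - Fu))"
      using E w matrix_form_weak_grad_segment[OF \<Omega> A_meas A_bdd uH vH] W(2)
      by (auto simp: matrix_form_def)
    then show ?thesis
      unfolding Eu by (simp add: algebra_simps)
  qed
  then show ?thesis by blast
qed

lemma nonneg_quadratic_imp_linear_coeff_eq_0:
  fixes b c :: real
  assumes "\<And>t. 0 \<le> t * b + t\<^sup>2 * c"
  shows "b = 0"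
proof (rule ccontr)
  assume "b \<noteq> 0"
  define s where "s = 1 / (\<bar>c\<bar> + 1)"
  have s: "0 < s" "s * c < 1"
    unfolding s_def by (auto simp: field_simps)
  have "0 \<le> (- s * b) * b + (- s * b)\<^sup>2 * c" by (rule assms)
  also have "\<dots> = s * b\<^sup>2 * (s * c - 1)" by (simp add: power2_eq_square algebra_simps)
  also have "\<dots> < 0" using s \<open>b \<noteq> 0\<close> by (intro mult_pos_neg) auto
  finally show False by simp
qed

text \<open>Since \<open>u\<close> minimises \<open>E\<close> on the line through \<open>u\<close> and \<open>v\<close>, the linear term of the
  quadratic polynomial \<open>t \<mapsto> E (u + t (v - u))\<close> vanishes, so \<open>E v - E u\<close> is its quadratic
  coefficient, which coercivity bounds from below.\<close>

lemma quadratic_energy_gap: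
  fixes A :: "real^'n::finite \<Rightarrow> real^'n^'n" and E :: "(real^'n \<Rightarrow> real) \<Rightarrow> real"
  assumes \<Omega>: "open \<Omega>" and \<alpha>: "0 < \<alpha>" and f: "L2 \<Omega> f"
    and A_meas: "A \<in> borel_measurable (lebesgue_on \<Omega>)" and A_bdd: "bounded (A ` \<Omega>)"
    and coercive: "\<forall>x\<in>\<Omega>. \<forall>\<xi>. \<alpha> * (norm \<xi>)\<^sup>2 \<le> \<xi> \<bullet> (A x *v \<xi>)"
    and E: "\<forall>w\<in>W. E w = 1/2 * (\<integral>x. (A x *v weak_grad \<Omega> w x) \<bullet> weak_grad \<Omega> w x \<partial>lebesgue_on \<Omega>)
                        - (\<integral>x. f x * w x \<partial>lebesgue_on \<Omega>)"
    and W: "lin_subspace W" "W \<subseteq> H1 \<Omega>" and u: "u \<in> W" and min: "\<And>w. w \<in> W \<Longrightarrow> E u \<le> E w"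
    and v: "v \<in> W"
  shows "grad_dist2 \<Omega> u v \<le> ennreal (2 / \<alpha> * (E v - E u))"
proof -
  let ?M = "lebesgue_on \<Omega>"
  let ?Z = "\<lambda>x. weak_grad \<Omega> v x - weak_grad \<Omega> u x"
  let ?Q = "matrix_form \<Omega> A ?Z ?Z"
  have uH: "u \<in> H1 \<Omega>" and vH: "v \<in> H1 \<Omega>" using W u v by auto
  obtain b where seg: "\<And>t. E (\<lambda>x. u x + t * (v x - u x)) = E u + t * b + t\<^sup>2 / 2 * ?Q"
    using quadratic_energy_along_segment[OF \<Omega> f A_meas A_bdd E W u v] by blast
  have "0 \<le> t * b + t\<^sup>2 * (?Q / 2)" for t
    using min[OF lin_subspace_segment[OF W(1) u v, of t]] seg[of t] by simp
  then have "b = 0" by (rule nonneg_quadratic_imp_linear_coeff_eq_0)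
  then have gap: "E v - E u = ?Q / 2" using seg[of 1] by simp
  have Z2: "square_integrable ?M (\<lambda>x. ?Z x $ i)" for i
    using square_integrable_weak_grad_nth[OF \<Omega>] uH vH by (simp add: square_integrable_diff)
  obtain K where K: "\<And>x. x \<in> space ?M \<Longrightarrow> norm (A x) \<le> K"
    using A_bdd unfolding bounded_iff by auto
  have "(\<integral>x. \<alpha> * (norm (?Z x))\<^sup>2 \<partial>?M) \<le> ?Q"
    unfolding matrix_form_def
  proof (rule integral_mono)
    show "integrable ?M (\<lambda>x. \<alpha> * (norm (?Z x))\<^sup>2)"
      using integrable_norm_power2_vec[OF Z2] by simp
    show "integrable ?M (\<lambda>x. (A x *v ?Z x) \<bullet> ?Z x)"
      by (rule integrable_matrix_form[OF A_meas K Z2 Z2])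
    show "\<alpha> * (norm (?Z x))\<^sup>2 \<le> (A x *v ?Z x) \<bullet> ?Z x" if "x \<in> space ?M" for x
      using coercive that by (simp add: inner_commute)
  qed
  then have "(\<integral>x. (norm (weak_grad \<Omega> u x - weak_grad \<Omega> v x))\<^sup>2 \<partial>?M) \<le> 2 / \<alpha> * (E v - E u)"
    using \<alpha> gap by (simp add: norm_minus_commute field_simps)
  then show ?thesis
    using grad_dist2_eq_integral(2)[OF \<Omega> uH vH] by (simp add: ennreal_leI)
qed

lemma borel_measurable_compose_pair:
  fixes a :: "real^'n::finite \<Rightarrow> real \<Rightarrow> real"
  assumes "(\<lambda>(x, s). a x s) \<in> borel_measurable borel" "v \<in> borel_measurable (lebesgue_on \<Omega>)"
  shows "(\<lambda>x. a x (v x)) \<in> borel_measurable (lebesgue_on \<Omega>)"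
proof -
  have "(\<lambda>x. x) \<in> lebesgue_on \<Omega> \<rightarrow>\<^sub>M (borel :: (real^'n) measure)"
    by (intro measurable_restrict_space1 measurable_completion) simp
  then have "(\<lambda>x. (x, v x)) \<in> lebesgue_on \<Omega> \<rightarrow>\<^sub>M borel \<Otimes>\<^sub>M borel"
    using assms(2) by (rule measurable_Pair)
  moreover have "(\<lambda>(x, s). a x s) \<in> borel_measurable (borel \<Otimes>\<^sub>M borel)"
    using assms(1) by (simp add: borel_prod)
  ultimately show ?thesis
    using measurable_compose by simp
qed

lemma nonlinear_form_coercive:
  fixes a :: "real^'n::finite \<Rightarrow> real \<Rightarrow> real"
  assumes \<Omega>: "open \<Omega>" and \<alpha>: "0 < \<alpha>"
    and a_meas: "(\<lambda>(x, s). a x s) \<in> borel_measurable borel"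
    and a_bounds: "\<forall>x\<in>\<Omega>. \<forall>s. \<alpha> \<le> a x s \<and> a x s \<le> \<Lambda>"
    and w: "w \<in> H1 \<Omega>"
  shows "integrable (lebesgue_on \<Omega>) (\<lambda>x. a x (w x) * (norm (weak_grad \<Omega> w x))\<^sup>2)"
    and "\<alpha> * (\<integral>x. (norm (weak_grad \<Omega> w x))\<^sup>2 \<partial>lebesgue_on \<Omega>)
           \<le> (\<integral>x. a x (w x) * (norm (weak_grad \<Omega> w x))\<^sup>2 \<partial>lebesgue_on \<Omega>)"
proof -
  let ?M = "lebesgue_on \<Omega>"
  have N: "integrable ?M (\<lambda>x. (norm (weak_grad \<Omega> w x))\<^sup>2)"
    by (intro integrable_norm_power2_vec square_integrable_weak_grad_nth[OF \<Omega> w])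
  show int: "integrable ?M (\<lambda>x. a x (w x) * (norm (weak_grad \<Omega> w x))\<^sup>2)"
  proof (rule integrable_bounded_mult[OF _ _ N])
    show "(\<lambda>x. a x (w x)) \<in> borel_measurable ?M"
      using w a_meas borel_measurable_compose_pair unfolding H1_def L2_def by blast
    show "\<bar>a x (w x)\<bar> \<le> \<Lambda>" if "x \<in> space ?M" for x
    proof -
      have "\<alpha> \<le> a x (w x)" "a x (w x) \<le> \<Lambda>"
        using a_bounds that by auto
      then show ?thesis using \<alpha> by simp
    qed
  qed
  have "(\<integral>x. \<alpha> * (norm (weak_grad \<Omega> w x))\<^sup>2 \<partial>?M) \<le> (\<integral>x. a x (w x) * (norm (weak_grad \<Omega> w x))\<^sup>2 \<partial>?M)"
    using N int a_bounds by (intro integral_mono) (auto intro!: mult_right_mono)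
  then show "\<alpha> * (\<integral>x. (norm (weak_grad \<Omega> w x))\<^sup>2 \<partial>?M) \<le> (\<integral>x. a x (w x) * (norm (weak_grad \<Omega> w x))\<^sup>2 \<partial>?M)"
    by simp
qed

text \<open>Without a load term the energy is nonnegative and vanishes at \<open>0\<close>.\<close>

lemma nonlinear_energy_minimiser:
  fixes a :: "real^'n::finite \<Rightarrow> real \<Rightarrow> real" and E :: "(real^'n \<Rightarrow> real) \<Rightarrow> real"
  assumes \<Omega>: "open \<Omega>" and \<alpha>: "0 < \<alpha>"
    and a_meas: "(\<lambda>(x, s). a x s) \<in> borel_measurable borel"
    and a_bounds: "\<forall>x\<in>\<Omega>. \<forall>s. \<alpha> \<le> a x s \<and> a x s \<le> \<Lambda>"
    and E: "\<forall>w\<in>W. E w = 1/2 * (\<integral>x. a x (w x) * (norm (weak_grad \<Omega> w x))\<^sup>2 \<partial>lebesgue_on \<Omega>)"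
    and W: "lin_subspace W" "W \<subseteq> H1 \<Omega>" and u: "u \<in> W" and min: "\<And>w. w \<in> W \<Longrightarrow> E u \<le> E w"
  shows "E u = 0" and "AE x in lebesgue_on \<Omega>. weak_grad \<Omega> u x = 0"
proof -
  let ?M = "lebesgue_on \<Omega>"
  let ?N = "\<lambda>w x. (norm (weak_grad \<Omega> w x))\<^sup>2"
  have zero: "(\<lambda>x. 0) \<in> W"
    using W(1) unfolding lin_subspace_def by blast
  have "AE x in ?M. a x 0 * ?N (\<lambda>x. 0) x = 0"
    using weak_grad_zero_AE[OF \<Omega>] by eventually_elim simp
  then have "(\<integral>x. a x 0 * ?N (\<lambda>x. 0) x \<partial>?M) = 0"
    by (rule integral_eq_zero_AE)
  then have "E (\<lambda>x. 0) = 0"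
    using E[rule_format, OF zero] by simp
  then have "E u \<le> 0"
    using min[OF zero] by simp
  moreover have uH: "u \<in> H1 \<Omega>" using u W(2) by auto
  then have "\<alpha> * (\<integral>x. ?N u x \<partial>?M) \<le> 2 * E u"
    using nonlinear_form_coercive(2)[OF \<Omega> \<alpha> a_meas a_bounds uH] E[rule_format, OF u] by simp
  moreover have "0 \<le> \<alpha> * (\<integral>x. ?N u x \<partial>?M)"
    using \<alpha> by simp
  ultimately have "E u = 0" and "\<alpha> * (\<integral>x. ?N u x \<partial>?M) = 0"
    by linarith+
  then show "E u = 0" by simp
  from \<open>\<alpha> * (\<integral>x. ?N u x \<partial>?M) = 0\<close> have "(\<integral>x. ?N u x \<partial>?M) = 0"
    using \<alpha> by simp
  moreover have "integrable ?M (?N u)"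
    by (intro integrable_norm_power2_vec square_integrable_weak_grad_nth[OF \<Omega> uH])
  ultimately have "AE x in ?M. ?N u x = 0"
    by (subst integral_nonneg_eq_0_iff_AE[symmetric]) auto
  then show "AE x in ?M. weak_grad \<Omega> u x = 0"
    by eventually_elim simp
qed

lemma nonlinear_energy_gap:
  fixes a :: "real^'n::finite \<Rightarrow> real \<Rightarrow> real" and E :: "(real^'n \<Rightarrow> real) \<Rightarrow> real"
  assumes \<Omega>: "open \<Omega>" and \<alpha>: "0 < \<alpha>"
    and a_meas: "(\<lambda>(x, s). a x s) \<in> borel_measurable borel"
    and a_bounds: "\<forall>x\<in>\<Omega>. \<forall>s. \<alpha> \<le> a x s \<and> a x s \<le> \<Lambda>"
    and E: "\<forall>w\<in>W. E w = 1/2 * (\<integral>x. a x (w x) * (norm (weak_grad \<Omega> w x))\<^sup>2 \<partial>lebesgue_on \<Omega>)"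
    and W: "lin_subspace W" "W \<subseteq> H1 \<Omega>" and u: "u \<in> W" and min: "\<And>w. w \<in> W \<Longrightarrow> E u \<le> E w"
    and v: "v \<in> W"
  shows "grad_dist2 \<Omega> u v \<le> ennreal (2 / \<alpha> * (E v - E u))"
proof -
  let ?M = "lebesgue_on \<Omega>"
  let ?N = "\<lambda>x. (norm (weak_grad \<Omega> v x))\<^sup>2"
  have minimiser: "E u = 0" "AE x in ?M. weak_grad \<Omega> u x = 0"
    by (rule nonlinear_energy_minimiser[OF \<Omega> \<alpha> a_meas a_bounds E W u], fact min)+
  have uH: "u \<in> H1 \<Omega>" and vH: "v \<in> H1 \<Omega>"
    using u v W(2) by auto
  have "AE x in ?M. (norm (weak_grad \<Omega> u x - weak_grad \<Omega> v x))\<^sup>2 = ?N x"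
    using minimiser(2) by eventually_elim simp
  then have "(\<integral>x. (norm (weak_grad \<Omega> u x - weak_grad \<Omega> v x))\<^sup>2 \<partial>?M) = (\<integral>x. ?N x \<partial>?M)"
    using grad_dist2_eq_integral(1)[OF \<Omega> uH vH]
      integrable_norm_power2_vec[OF square_integrable_weak_grad_nth[OF \<Omega> vH]]
    by (intro integral_cong_AE) auto
  also have "\<dots> \<le> 2 / \<alpha> * (E v - E u)"
    using nonlinear_form_coercive(2)[OF \<Omega> \<alpha> a_meas a_bounds vH] E v \<alpha> minimiser(1)
    by (simp add: field_simps)
  finally show ?thesis
    using grad_dist2_eq_integral(2)[OF \<Omega> uH vH] by (simp add: ennreal_leI)
qed

definition quadratic_energy ::
    "(real^'n::finite) set \<Rightarrow> real \<Rightarrow> (real^'n \<Rightarrow> real) set \<Rightarrow> ((real^'n \<Rightarrow> real) \<Rightarrow> real) \<Rightarrow> bool" where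
  "quadratic_energy \<Omega> \<alpha> V E \<longleftrightarrow>
     (\<exists>(A :: real^'n \<Rightarrow> real^'n^'n) f. L2 \<Omega> f \<and> A \<in> borel_measurable (lebesgue_on \<Omega>) \<and>
        bounded (A ` \<Omega>) \<and> (\<forall>x\<in>\<Omega>. \<forall>\<xi>. \<alpha> * (norm \<xi>)\<^sup>2 \<le> \<xi> \<bullet> (A x *v \<xi>)) \<and>
        (\<forall>v\<in>V. E v = 1/2 * (\<integral>x. (A x *v weak_grad \<Omega> v x) \<bullet> weak_grad \<Omega> v x \<partial>lebesgue_on \<Omega>)
                       - (\<integral>x. f x * v x \<partial>lebesgue_on \<Omega>)))"

definition nonlinear_energy ::
    "(real^'n::finite) set \<Rightarrow> real \<Rightarrow> (real^'n \<Rightarrow> real) set \<Rightarrow> ((real^'n \<Rightarrow> real) \<Rightarrow> real) \<Rightarrow> bool" where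
  "nonlinear_energy \<Omega> \<alpha> V E \<longleftrightarrow>
     (\<exists>a :: real^'n \<Rightarrow> real \<Rightarrow> real. (\<lambda>(x, s). a x s) \<in> borel_measurable borel \<and>
        (\<exists>\<Lambda>. \<forall>x\<in>\<Omega>. \<forall>s. \<alpha> \<le> a x s \<and> a x s \<le> \<Lambda>) \<and>
        (\<forall>v\<in>V. E v = 1/2 * (\<integral>x. a x (v x) * (norm (weak_grad \<Omega> v x))\<^sup>2 \<partial>lebesgue_on \<Omega>)))"

lemma energy_gap:
  assumes \<Omega>: "open \<Omega>" and \<alpha>: "0 < \<alpha>"
    and E: "quadratic_energy \<Omega> \<alpha> V E \<or> nonlinear_energy \<Omega> \<alpha> V E"
    and W: "lin_subspace W" "W \<subseteq> V" and V: "V \<subseteq> H1 \<Omega>"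
    and u: "u \<in> W" and min: "\<And>w. w \<in> W \<Longrightarrow> E u \<le> E w" and v: "v \<in> W"
  shows "grad_dist2 \<Omega> u v \<le> ennreal (2 / \<alpha> * (E v - E u))"
  using E
proof
  assume "quadratic_energy \<Omega> \<alpha> V E"
  then obtain A f where coefficients: "L2 \<Omega> f" "A \<in> borel_measurable (lebesgue_on \<Omega>)"
      "bounded (A ` \<Omega>)" "\<forall>x\<in>\<Omega>. \<forall>\<xi>. \<alpha> * (norm \<xi>)\<^sup>2 \<le> \<xi> \<bullet> (A x *v \<xi>)"
    and E_W: "\<forall>v\<in>W. E v = 1/2 * (\<integral>x. (A x *v weak_grad \<Omega> v x) \<bullet> weak_grad \<Omega> v x \<partial>lebesgue_on \<Omega>)
                       - (\<integral>x. f x * v x \<partial>lebesgue_on \<Omega>)"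
    using W(2) unfolding quadratic_energy_def by blast
  show ?thesis
    using W V by (intro quadratic_energy_gap[OF \<Omega> \<alpha> coefficients E_W W(1) _ u min v]) auto
next
  assume "nonlinear_energy \<Omega> \<alpha> V E"
  then obtain a \<Lambda> where coefficient: "(\<lambda>(x, s). a x s) \<in> borel_measurable borel"
      "\<forall>x\<in>\<Omega>. \<forall>s. \<alpha> \<le> a x s \<and> a x s \<le> \<Lambda>"
    and E_W: "\<forall>v\<in>W. E v = 1/2 * (\<integral>x. a x (v x) * (norm (weak_grad \<Omega> v x))\<^sup>2 \<partial>lebesgue_on \<Omega>)"
    using W(2) unfolding nonlinear_energy_def by blast
  show ?thesis
    using W V by (intro nonlinear_energy_gap[OF \<Omega> \<alpha> coefficient E_W W(1) _ u min v]) auto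
qed

lemma grad_dist2_le_discretisation_plus_gap:
  assumes \<Omega>: "open \<Omega>" and \<alpha>: "0 < \<alpha>"
    and E: "quadratic_energy \<Omega> \<alpha> V E \<or> nonlinear_energy \<Omega> \<alpha> V E"
    and W: "lin_subspace W" "W \<subseteq> V" and V: "V \<subseteq> H1 \<Omega>" and u: "u \<in> V"
    and u\<^sub>h: "u\<^sub>h \<in> W" and min: "\<And>w. w \<in> W \<Longrightarrow> E u\<^sub>h \<le> E w" and v: "v \<in> W"
    and discretisation: "grad_dist2 \<Omega> u u\<^sub>h \<le> ennreal Ca * X"
  shows "grad_dist2 \<Omega> u v
           \<le> ennreal (2 * max Ca 0 + 4 / \<alpha>) * X + ennreal (2 * max Ca 0 + 4 / \<alpha>) * ennreal (E v - E u\<^sub>h)"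
proof -
  let ?C = "2 * max Ca 0 + 4 / \<alpha>" and ?\<delta> = "E v - E u\<^sub>h"
  have "2 * ennreal Ca = ennreal (2 * Ca)"
    by (simp add: ennreal_mult')
  also have "\<dots> \<le> ennreal ?C"
    using \<alpha> by (intro ennreal_leI) (simp add: add_increasing2)
  finally have Ca_le: "2 * ennreal Ca \<le> ennreal ?C" .
  have "2 * ennreal (2 / \<alpha> * ?\<delta>) = ennreal (2 * (2 / \<alpha> * ?\<delta>))"
    using ennreal_mult'[of 2 "2 / \<alpha> * ?\<delta>"] by simp
  also have "\<dots> = ennreal (4 / \<alpha>) * ennreal ?\<delta>"
    using \<alpha> ennreal_mult'[of "4 / \<alpha>" ?\<delta>] by simp
  also have "\<dots> \<le> ennreal ?C * ennreal ?\<delta>"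
    by (intro mult_right_mono ennreal_leI) auto
  finally have gap_le: "2 * ennreal (2 / \<alpha> * ?\<delta>) \<le> ennreal ?C * ennreal ?\<delta>" .
  have "grad_dist2 \<Omega> u v \<le> 2 * grad_dist2 \<Omega> u u\<^sub>h + 2 * grad_dist2 \<Omega> u\<^sub>h v"
    using u u\<^sub>h v W(2) V by (intro grad_dist2_triangle[OF \<Omega>]) auto
  also have "\<dots> \<le> 2 * (ennreal Ca * X) + 2 * ennreal (2 / \<alpha> * ?\<delta>)"
    using discretisation energy_gap[OF \<Omega> \<alpha> E W V u\<^sub>h min v] by (intro add_mono mult_left_mono) auto
  also have "\<dots> \<le> ennreal ?C * X + ennreal ?C * ennreal ?\<delta>"
    using Ca_le gap_le by (intro add_mono) (auto simp: mult.assoc[symmetric] intro: mult_right_mono)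
  finally show ?thesis .
qed

lemma nn_integral_le_sum_bound:
  assumes "\<And>x. x \<in> space M \<Longrightarrow> f x \<le> c * g x + c * h x"
    and "g \<in> borel_measurable M" "h \<in> borel_measurable M"
  shows "(\<integral>\<^sup>+x. f x \<partial>M) \<le> c * ((\<integral>\<^sup>+x. g x \<partial>M) + (\<integral>\<^sup>+x. h x \<partial>M))"
proof -
  have "(\<integral>\<^sup>+x. f x \<partial>M) \<le> (\<integral>\<^sup>+x. c * g x + c * h x \<partial>M)"
    using assms(1) by (rule nn_integral_mono)
  also have "\<dots> = c * ((\<integral>\<^sup>+x. g x \<partial>M) + (\<integral>\<^sup>+x. h x \<partial>M))"
    using assms(2,3) by (simp add: nn_integral_add nn_integral_cmult distrib_left)
  finally show ?thesis .
qed

theorem mainTheorem4: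
  fixes \<Omega> :: "(real^'n) set"
    and V :: "(real^'n \<Rightarrow> real) set"
    and D :: "(real^'d) set"
    and M :: "(real^'d) measure"
    and E :: "real^'d \<Rightarrow> (real^'n \<Rightarrow> real) \<Rightarrow> real"
    and \<alpha> :: real
    and p :: nat
    and Ms :: "(real^'n) set set set"
    and Asol :: "real^'d \<Rightarrow> (real^'n \<Rightarrow> real)"
    and Ah :: "(real^'n) set set \<Rightarrow> real^'d \<Rightarrow> (real^'n \<Rightarrow> real)"
    and Ca :: real
  assumes dom: "bounded_domain \<Omega>"
    and V_sub: "lin_subspace V" "V \<subseteq> H1 \<Omega>"
    and prob: "prob_space M" "space M = D" "sets M = sets (restrict_space borel D)"
    and alpha: "\<alpha> > 0"
    and deg: "p \<ge> 1"
    and meshes: "\<forall>T\<in>Ms. is_mesh \<Omega> T"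
    and energy:
      "(\<exists>(A :: real^'d \<Rightarrow> real^'n \<Rightarrow> real^'n^'n) (f :: real^'d \<Rightarrow> real^'n \<Rightarrow> real).
          (\<forall>\<mu>\<in>D. L2 \<Omega> (f \<mu>) \<and> A \<mu> \<in> borel_measurable (lebesgue_on \<Omega>) \<and>
                  bounded (A \<mu> ` \<Omega>) \<and>
                  (\<forall>x\<in>\<Omega>. \<forall>\<xi>. \<alpha> * (norm \<xi>)\<^sup>2 \<le> \<xi> \<bullet> (A \<mu> x *v \<xi>))) \<and>
          (\<forall>\<mu>\<in>D. \<forall>v\<in>V. E \<mu> v =
              1/2 * (\<integral>x. (A \<mu> x *v weak_grad \<Omega> v x) \<bullet> weak_grad \<Omega> v x \<partial>lebesgue_on \<Omega>)
              - (\<integral>x. f \<mu> x * v x \<partial>lebesgue_on \<Omega>)))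
       \<or>
       (\<exists>a :: real^'d \<Rightarrow> real^'n \<Rightarrow> real \<Rightarrow> real.
          (\<forall>\<mu>\<in>D. (\<lambda>(x, s). a \<mu> x s) \<in> borel_measurable borel \<and>
                  (\<forall>x s. a \<mu> x differentiable (at s)) \<and>
                  (\<exists>\<Lambda>. \<forall>x\<in>\<Omega>. \<forall>s. \<alpha> \<le> a \<mu> x s \<and> a \<mu> x s \<le> \<Lambda>)) \<and>
          (\<forall>\<mu>\<in>D. \<forall>v\<in>V. E \<mu> v =
              1/2 * (\<integral>x. a \<mu> x (v x) * (norm (weak_grad \<Omega> v x))\<^sup>2 \<partial>lebesgue_on \<Omega>)) \<and>
          (\<forall>T\<in>Ms. \<forall>\<mu>\<in>D. \<forall>x\<in>\<Omega>. deriv (a \<mu> x) (Ah T \<mu> x) * Ah T \<mu> x \<ge> 0))"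
    and sol: "\<forall>\<mu>\<in>D. Asol \<mu> \<in> V \<and> (\<forall>v\<in>V. E \<mu> (Asol \<mu>) \<le> E \<mu> v)"
    and disc_sol: "\<forall>T\<in>Ms. \<forall>\<mu>\<in>D. Ah T \<mu> \<in> lagrange_fe \<Omega> T p V \<and>
                     (\<forall>v\<in>lagrange_fe \<Omega> T p V. E \<mu> (Ah T \<mu>) \<le> E \<mu> v)"
    and apriori: "\<forall>T\<in>Ms. \<forall>\<mu>\<in>D. grad_dist2 \<Omega> (Asol \<mu>) (Ah T \<mu>)
                     \<le> ennreal Ca * ennreal (mesh_size T ^ (2*p)) * Dnorm2 \<Omega> (p+1) (Asol \<mu>)"
    and meas_D: "(\<lambda>\<mu>. Dnorm2 \<Omega> (p+1) (Asol \<mu>)) \<in> borel_measurable M"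
  shows "\<exists>C>0. \<forall>T\<in>Ms. \<forall>(A\<theta> :: real^'d \<Rightarrow> (real^'n \<Rightarrow> real)) (\<epsilon>::real).
           (\<forall>\<mu>\<in>D. A\<theta> \<mu> \<in> lagrange_fe \<Omega> T p V) \<and> \<epsilon> > 0 \<and>
           (\<lambda>\<mu>. ennreal (E \<mu> (A\<theta> \<mu>) - E \<mu> (Ah T \<mu>))) \<in> borel_measurable M \<and>
           (\<integral>\<^sup>+\<mu>. ennreal (E \<mu> (A\<theta> \<mu>) - E \<mu> (Ah T \<mu>)) \<partial>M) \<le> ennreal \<epsilon>
           \<longrightarrow>
           (\<integral>\<^sup>+\<mu>. grad_dist2 \<Omega> (Asol \<mu>) (A\<theta> \<mu>) \<partial>M)
             \<le> ennreal C * (ennreal (mesh_size T ^ (2*p)) * (\<integral>\<^sup>+\<mu>. Dnorm2 \<Omega> (p+1) (Asol \<mu>) \<partial>M)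
                            + ennreal \<epsilon>)"
proof -
  have \<Omega>: "open \<Omega>" using dom by (simp add: bounded_domain_def)
  have energy_type: "quadratic_energy \<Omega> \<alpha> V (E \<mu>) \<or> nonlinear_energy \<Omega> \<alpha> V (E \<mu>)" if "\<mu> \<in> D" for \<mu>
    using energy
  proof (elim disjE exE conjE, goal_cases)
    case (1 A f)
    then show ?case unfolding quadratic_energy_def
      using that by (intro disjI1 exI[of _ "A \<mu>"] exI[of _ "f \<mu>"]) auto
  next
    case (2 a)
    then show ?case unfolding nonlinear_energy_def
      using that by (intro disjI2 exI[of _ "a \<mu>"]) auto
  qed
  let ?C = "2 * max Ca 0 + 4 / \<alpha>"
  show ?thesis
  proof (intro exI[of _ ?C] conjI ballI allI impI, goal_cases)
    case 1
    show ?case using alpha by (simp add: add_nonneg_pos)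
  next
    case (2 T A\<theta> \<epsilon>)
    let ?h = "ennreal (mesh_size T ^ (2*p))"
    let ?gap = "\<lambda>\<mu>. ennreal (E \<mu> (A\<theta> \<mu>) - E \<mu> (Ah T \<mu>))"
    have W: "lin_subspace (lagrange_fe \<Omega> T p V)" "lagrange_fe \<Omega> T p V \<subseteq> V"
      using lin_subspace_lagrange_fe[OF V_sub(1)] by (auto simp: lagrange_fe_def)
    have "grad_dist2 \<Omega> (Asol \<mu>) (A\<theta> \<mu>) \<le> ennreal ?C * (?h * Dnorm2 \<Omega> (p+1) (Asol \<mu>)) + ennreal ?C * ?gap \<mu>"
      if "\<mu> \<in> space M" for \<mu>
    proof -
      have \<mu>: "\<mu> \<in> D" using that prob(2) by simp
      show ?thesis
        using sol disc_sol apriori 2 \<mu>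
        by (intro grad_dist2_le_discretisation_plus_gap[OF \<Omega> alpha energy_type[OF \<mu>] W V_sub(2)])
           (auto simp: mult.assoc)
    qed
    then have "(\<integral>\<^sup>+\<mu>. grad_dist2 \<Omega> (Asol \<mu>) (A\<theta> \<mu>) \<partial>M)
        \<le> ennreal ?C * ((\<integral>\<^sup>+\<mu>. ?h * Dnorm2 \<Omega> (p+1) (Asol \<mu>) \<partial>M) + (\<integral>\<^sup>+\<mu>. ?gap \<mu> \<partial>M))"
      using meas_D 2 by (intro nn_integral_le_sum_bound) auto
    also have "\<dots> \<le> ennreal ?C * (?h * (\<integral>\<^sup>+\<mu>. Dnorm2 \<Omega> (p+1) (Asol \<mu>) \<partial>M) + ennreal \<epsilon>)"
      using meas_D 2 by (simp add: nn_integral_cmult add_left_mono mult_left_mono)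
    finally show ?case .
  qed
qed

end
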